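(* Let $\rho=\rho^{ABC}$ be as follows: $A$ is $d$-dimensional, $B=B_1B_2$ with $B_1$ finite-dimensional and $B_2$ a qubit, $C$ a qubit, and $$\rho^{ABC}=p_1\,\rho_1^{AB_1}\otimes|\Psi^+\rangle\langle\Psi^+|^{B_2C}+p_2\,\rho_2^{AB_1}\otimes|\Psi^-\rangle\langle\Psi^-|^{B_2C},$$ with states $\rho_1^{AB_1},\rho_2^{AB_1}$, probabilities $p_1+p_2=1$, and $|\Psi^\pm\rangle=(|01\rangle\pm|10\rangle)/\sqrt2$. Then $S(\rho^{AB})\ge S(\rho^{ABC})$, where $\rho^{AB}=\mathrm{Tr}_C\rho^{ABC}$ and $S$ is the von Neumann entropy (base 2). Moreover, if $S(\rho^{AB})=S(\rho^{ABC})$, then $\rho_1^{AB_1}=\rho_2^{AB_1}$, $p_1=p_2=\tfrac12$, and $\rho^{ABC}$ is separable with respect to the bipartition $AB|C$. Consequently (using that $S(\rho^{AB})>S(\rho^{ABC})$ implies distillability across $AB|C$), no such state is bound entangled across $AB|C$.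
   Context: $S(\rho)=-\mathrm{Tr}\,\rho\log_2\rho$. A state is bound entangled across a cut if it is entangled across that cut but not distillable. *)

theory Defs
  imports "Jordan_Normal_Form.Matrix" "Jordan_Normal_Form.Char_Poly"
    "Jordan_Normal_Form.Schur_Decomposition" "HOL-Computational_Algebra.Polynomial"
begin

definition mtrace :: "complex mat \<Rightarrow> complex" where
  "mtrace A = (\<Sum>i<dim_row A. A $$ (i, i))"

definition hermitian_mat :: "nat \<Rightarrow> complex mat \<Rightarrow> bool" where
  "hermitian_mat n A \<longleftrightarrow> A \<in> carrier_mat n n \<and> mat_adjoint A = A"

definition psd_mat :: "nat \<Rightarrow> complex mat \<Rightarrow> bool" where
  "psd_mat n A \<longleftrightarrow> hermitian_mat n A \<and>
     (\<forall>v \<in> carrier_vec n. 0 \<le> Re ((A *\<^sub>v v) \<bullet>c v))"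

definition density :: "nat \<Rightarrow> complex mat \<Rightarrow> bool" where
  "density n A \<longleftrightarrow> psd_mat n A \<and> mtrace A = 1"

(* Kronecker (tensor) product; the index of the left factor is the more significant one *)
definition kron :: "complex mat \<Rightarrow> complex mat \<Rightarrow> complex mat" where
  "kron A B = mat (dim_row A * dim_row B) (dim_col A * dim_col B)
     (\<lambda>(i, j). A $$ (i div dim_row B, j div dim_col B) * B $$ (i mod dim_row B, j mod dim_col B))"

definition ptrace_last :: "nat \<Rightarrow> complex mat \<Rightarrow> complex mat" where
  "ptrace_last k A = mat (dim_row A div k) (dim_col A div k)
     (\<lambda>(i, j). \<Sum>c<k. A $$ (i * k + c, j * k + c))"

definition vn_entropy :: "complex mat \<Rightarrow> real" where
  "vn_entropy A = - (\<Sum>x\<in>{x. eigenvalue A x}.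
       real (order x (char_poly A)) * (if Re x = 0 then 0 else Re x * log 2 (Re x)))"

definition proj :: "complex vec \<Rightarrow> complex mat" where
  "proj v = mat (dim_vec v) (dim_vec v) (\<lambda>(i, j). v $ i * cnj (v $ j))"

(* two-qubit basis index: |xy> has index 2*x + y *)
definition psi_plus :: "complex vec" where
  "psi_plus = vec 4 (\<lambda>i. if i = 1 \<or> i = 2 then 1 / complex_of_real (sqrt 2) else 0)"

definition psi_minus :: "complex vec" where
  "psi_minus = vec 4 (\<lambda>i. if i = 1 then 1 / complex_of_real (sqrt 2)
                         else if i = 2 then - 1 / complex_of_real (sqrt 2) else 0)"

definition separable :: "nat \<Rightarrow> nat \<Rightarrow> complex mat \<Rightarrow> bool" where
  "separable dX dY \<rho> \<longleftrightarrow> \<rho> \<in> carrier_mat (dX * dY) (dX * dY) \<and>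
     (\<exists>(N::nat) (p::nat \<Rightarrow> real) \<sigma> \<tau>.
        (\<forall>k<N. 0 \<le> p k \<and> density dX (\<sigma> k) \<and> density dY (\<tau> k)) \<and>
        (\<Sum>k<N. p k) = 1 \<and>
        (\<forall>i<dX * dY. \<forall>j<dX * dY.
            \<rho> $$ (i, j) = (\<Sum>k<N. complex_of_real (p k) * kron (\<sigma> k) (\<tau> k) $$ (i, j))))"

definition entangled :: "nat \<Rightarrow> nat \<Rightarrow> complex mat \<Rightarrow> bool" where
  "entangled dX dY \<rho> \<longleftrightarrow> density (dX * dY) \<rho> \<and> \<not> separable dX dY \<rho>"

definition bound_entangled :: "(complex mat \<Rightarrow> bool) \<Rightarrow> nat \<Rightarrow> nat \<Rightarrow> complex mat \<Rightarrow> bool" where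
  "bound_entangled distillable dX dY \<rho> \<longleftrightarrow> entangled dX dY \<rho> \<and> \<not> distillable \<rho>"

end

theory Submission
  imports Defs "HOL-Computational_Algebra.Fundamental_Theorem_Algebra"
begin

(* Diagonalise rho1 = Q1 D1 Q1^* and rho2 = Q2 D2 Q2^*. As Psi+ and Psi- are orthogonal, the unitary
   Q1 (x) V+ + Q2 (x) V-, with V+ and V- rotating |01> and |10> onto Psi+ and Psi-, diagonalises rho^ABC
   with eigenvalues p1 * spec(rho1) and p2 * spec(rho2); hence S(rho^ABC) = H(p1,p2) + p1 S(rho1) + p2 S(rho2).
   Tracing out C sends both Bell projectors to the maximally mixed qubit, so
   rho^AB = (p1 rho1 + p2 rho2) (x) 1/2 and S(rho^AB) = S(p1 rho1 + p2 rho2) + 1.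
   The gap S(rho^AB) - S(rho^ABC) is therefore the concavity gap of S plus 1 - H(p1,p2), both nonnegative;
   concavity of S comes from convexity of x log x, the squared moduli of a unitary matrix forming a doubly
   stochastic matrix. Equality forces p1 = p2 = 1/2 and, by strict convexity, rho1 = rho2, and then
   rho^ABC = rho1 (x) (|01><01| + |10><10|)/2 is separable across AB|C. *)

section \<open>Adjoints and unitary matrices\<close>

lemma index_mult_mat_sum:
  "i < dim_row A \<Longrightarrow> j < dim_col B \<Longrightarrow> dim_col A = dim_row B \<Longrightarrow>
   (A * B) $$ (i,j) = (\<Sum>k<dim_row B. A $$ (i,k) * B $$ (k,j))"
  by (simp add: scalar_prod_def atLeast0LessThan)

declare index_mult_mat(1)[simp del]
declare index_mult_mat_sum[simp]

lemma add_zero_mat_dim: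
  "dim_row A = nr \<Longrightarrow> dim_col A = nc \<Longrightarrow> A + 0\<^sub>m nr nc = (A :: 'a :: monoid_add mat)"
  "dim_row A = nr \<Longrightarrow> dim_col A = nc \<Longrightarrow> 0\<^sub>m nr nc + A = A"
  by (rule eq_matI; simp)+

lemma mat_adjoint_dim[simp]:
  "dim_row (mat_adjoint A) = dim_col A" "dim_col (mat_adjoint A) = dim_row A"
  by (auto simp: mat_adjoint_def)

lemma index_mat_adjoint[simp]:
  "i < dim_col A \<Longrightarrow> j < dim_row A \<Longrightarrow> mat_adjoint A $$ (i,j) = cnj (A $$ (j,i))"
  by (simp add: mat_adjoint_def mat_of_rows_def)

lemma mat_adjoint_carrier[simp]: "A \<in> carrier_mat n m \<Longrightarrow> mat_adjoint A \<in> carrier_mat m n"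
  by auto

lemma mat_adjoint_adjoint[simp]: "mat_adjoint (mat_adjoint (A::complex mat)) = A"
  by (rule eq_matI) auto

lemma mat_adjoint_mult:
  "dim_col (A::complex mat) = dim_row B \<Longrightarrow> mat_adjoint (A * B) = mat_adjoint B * mat_adjoint A"
  by (rule eq_matI) (auto simp: sum_distrib_left mult.commute)

lemma mat_adjoint_add:
  "(A::complex mat) \<in> carrier_mat n m \<Longrightarrow> B \<in> carrier_mat n m \<Longrightarrow>
   mat_adjoint (A + B) = mat_adjoint A + mat_adjoint B"
  by (rule eq_matI) auto

lemma mat_adjoint_smult: "mat_adjoint (c \<cdot>\<^sub>m (A::complex mat)) = cnj c \<cdot>\<^sub>m mat_adjoint A"
  by (rule eq_matI) auto

lemma mat_adjoint_one[simp]: "mat_adjoint (1\<^sub>m n :: complex mat) = 1\<^sub>m n"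
  by (rule eq_matI) auto

definition unitary :: "nat \<Rightarrow> complex mat \<Rightarrow> bool" where
  "unitary n U \<longleftrightarrow> U \<in> carrier_mat n n \<and> mat_adjoint U * U = 1\<^sub>m n \<and> U * mat_adjoint U = 1\<^sub>m n"

lemma unitaryI: "U \<in> carrier_mat n n \<Longrightarrow> mat_adjoint U * U = 1\<^sub>m n \<Longrightarrow> unitary n U"
  unfolding unitary_def using mat_mult_left_right_inverse[of "mat_adjoint U" n U] by auto

lemma unitary_carrier: "unitary n U \<Longrightarrow> U \<in> carrier_mat n n"
  unfolding unitary_def by auto

lemma unitary_one: "unitary n (1\<^sub>m n)"
  by (rule unitaryI) auto

lemma unitary_mat_adjoint: "unitary n U \<Longrightarrow> unitary n (mat_adjoint U)"
  unfolding unitary_def by auto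

lemma unitary_mult:
  assumes "unitary n U" "unitary n V"
  shows "unitary n (U * V)"
proof (rule unitaryI)
  have U: "U \<in> carrier_mat n n" and V: "V \<in> carrier_mat n n"
    using assms unitary_carrier by auto
  show "U * V \<in> carrier_mat n n" using U V by auto
  have "mat_adjoint (U * V) * (U * V) = mat_adjoint V * (mat_adjoint U * (U * V))"
    using U V by (simp add: mat_adjoint_mult assoc_mult_mat[of "mat_adjoint V" n n "mat_adjoint U" n "U*V" n])
  also have "\<dots> = mat_adjoint V * ((mat_adjoint U * U) * V)"
    using U V by (simp add: assoc_mult_mat[of _ n n _ n _ n])
  also have "\<dots> = 1\<^sub>m n" using assms U V unfolding unitary_def by auto
  finally show "mat_adjoint (U * V) * (U * V) = 1\<^sub>m n" .
qed

lemma assoc_mult_mat5: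
  assumes "A \<in> carrier_mat n n" "B \<in> carrier_mat n n" "C \<in> carrier_mat n n"
    "D \<in> carrier_mat n n" "E \<in> carrier_mat n n"
  shows "A * (B * C * D) * E = (A * B) * C * (D * E)"
  using assms by (simp add: assoc_mult_mat[of _ n n _ n _ n])

lemma unitary_conj_cancel:
  fixes A :: "complex mat"
  assumes "unitary n Q" "A \<in> carrier_mat n n"
  shows "Q * (mat_adjoint Q * A * Q) * mat_adjoint Q = A"
proof -
  have Q: "Q \<in> carrier_mat n n" using assms unitary_carrier by auto
  have "Q * (mat_adjoint Q * A * Q) * mat_adjoint Q = (Q * mat_adjoint Q) * A * (Q * mat_adjoint Q)"
    using assoc_mult_mat5[OF Q _ assms(2) Q] Q by simp
  also have "\<dots> = A" using assms unfolding unitary_def by simp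
  finally show ?thesis .
qed

lemma cscalar_prod_sum: "(x::complex vec) \<bullet>c y = (\<Sum>k<dim_vec y. x $ k * cnj (y $ k))"
  by (simp add: scalar_prod_def atLeast0LessThan)

lemma unitary_row_norm:
  assumes "unitary n M" "i < n"
  shows "(\<Sum>j<n. (cmod (M $$ (i,j)))\<^sup>2) = 1"
proof -
  have M: "M \<in> carrier_mat n n" and MM: "M * mat_adjoint M = 1\<^sub>m n"
    using assms unfolding unitary_def by auto
  have "complex_of_real (\<Sum>j<n. (cmod (M $$ (i,j)))\<^sup>2) = (\<Sum>j<n. M $$ (i,j) * cnj (M $$ (i,j)))"
    unfolding of_real_sum complex_norm_square ..
  also have "\<dots> = (M * mat_adjoint M) $$ (i,i)" using M assms(2) by simp
  also have "\<dots> = 1" using MM assms(2) by simp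
  finally show ?thesis by (simp only: of_real_eq_1_iff)
qed

lemma unitary_col_norm:
  assumes "unitary n M" "j < n"
  shows "(\<Sum>i<n. (cmod (M $$ (i,j)))\<^sup>2) = 1"
proof -
  have M: "M \<in> carrier_mat n n" and MM: "mat_adjoint M * M = 1\<^sub>m n"
    using assms unfolding unitary_def by auto
  have "complex_of_real (\<Sum>i<n. (cmod (M $$ (i,j)))\<^sup>2) = (\<Sum>i<n. M $$ (i,j) * cnj (M $$ (i,j)))"
    unfolding of_real_sum complex_norm_square ..
  also have "\<dots> = (mat_adjoint M * M) $$ (j,j)" using M assms(2) by (simp add: mult.commute)
  also have "\<dots> = 1" using MM assms(2) by simp
  finally show ?thesis by (simp only: of_real_eq_1_iff)
qed

section \<open>The spectral theorem for Hermitian matrices\<close>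

lemma corthogonal_completion:
  fixes v :: "complex vec"
  assumes v: "v \<in> carrier_vec n" and v0: "v \<noteq> 0\<^sub>v n"
  shows "\<exists>ws. set ws \<subseteq> carrier_vec n \<and> corthogonal ws \<and> length ws = n \<and> hd ws = v"
proof -
  interpret cof_vec_space n "TYPE(complex)" .
  define b where "b = basis_completion v"
  from basis_completion[OF v v0, folded b_def]
  have dist_b: "distinct b" and indep: "\<not> lin_dep (set b)" and b: "set b \<subseteq> carrier_vec n"
    and hdb: "hd b = v" and len_b: "length b = n" by auto
  have n: "n \<noteq> 0" using v v0 by auto
  from hdb len_b n obtain vs where bv: "b = v # vs" by (cases b, auto)
  define ws where "ws = gram_schmidt n b"
  from gram_schmidt_result[OF b dist_b indep refl, folded ws_def]
  have ws: "set ws \<subseteq> carrier_vec n" "corthogonal ws" "length ws = n" by (auto simp: len_b)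
  from gram_schmidt_hd[OF v, of vs, folded bv] have "hd ws = v" unfolding ws_def .
  with ws show ?thesis by blast
qed

definition vec_normalize :: "complex vec \<Rightarrow> complex vec" where
  "vec_normalize w = complex_of_real (1 / sqrt (\<Sum>k<dim_vec w. (cmod (w $ k))\<^sup>2)) \<cdot>\<^sub>v w"

lemma vec_normalize_carrier[simp]: "w \<in> carrier_vec n \<Longrightarrow> vec_normalize w \<in> carrier_vec n"
  by (simp add: vec_normalize_def)

lemma index_vec_normalize:
  "k < dim_vec w \<Longrightarrow>
   vec_normalize w $ k = complex_of_real (1 / sqrt (\<Sum>k<dim_vec w. (cmod (w $ k))\<^sup>2)) * w $ k"
  by (simp add: vec_normalize_def)

lemma unitary_mat_of_normalized_cols:
  assumes ws: "set ws \<subseteq> carrier_vec n" "corthogonal ws" "length ws = n"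
  shows "unitary n (mat_of_cols n (map vec_normalize ws))" (is "unitary n ?W")
proof (rule unitaryI)
  show W: "?W \<in> carrier_mat n n" using ws by auto
  show "mat_adjoint ?W * ?W = 1\<^sub>m n"
  proof (rule eq_matI)
    fix i j assume "i < dim_row (1\<^sub>m n)" and "j < dim_col (1\<^sub>m n)"
    hence i: "i < n" and j: "j < n" by auto
    have wi: "ws ! i \<in> carrier_vec n" and wj: "ws ! j \<in> carrier_vec n" using ws i j by auto
    define r where "r k = (\<Sum>l<n. (cmod (ws ! k $ l))\<^sup>2)" for k
    have "(mat_adjoint ?W * ?W) $$ (i, j) =
        (\<Sum>k<n. cnj (of_real (1/sqrt (r i)) * ws ! i $ k) * (of_real (1/sqrt (r j)) * ws ! j $ k))"
      using i j ws wi wj W unfolding r_def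
      by (auto simp: mat_of_cols_def index_vec_normalize intro!: sum.cong)
    also have "\<dots> = of_real (1/sqrt (r i)) * of_real (1/sqrt (r j)) * (ws ! j \<bullet>c ws ! i)"
      unfolding cscalar_prod_sum using wi wj by (simp add: sum_distrib_left algebra_simps)
    also have "\<dots> = 1\<^sub>m n $$ (i,j)"
    proof (cases "i = j")
      case True
      have self: "ws ! i \<bullet>c ws ! i = of_real (r i)"
        using wi unfolding cscalar_prod_sum r_def of_real_sum complex_norm_square by simp
      moreover have "ws ! i \<bullet>c ws ! i \<noteq> 0" using ws(2,3) i unfolding corthogonal_def by auto
      moreover have "r i \<ge> 0" unfolding r_def by (intro sum_nonneg) auto
      ultimately have "r i > 0" by auto
      then have "(1/sqrt (r i)) * (1/sqrt (r i)) * r i = 1"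
        by (simp add: field_simps real_sqrt_mult_self)
      then show ?thesis
        using True i self by (simp flip: of_real_mult)
    next
      case False
      then have "ws ! j \<bullet>c ws ! i = 0" using ws(2,3) i j unfolding corthogonal_def by auto
      then show ?thesis using False i j by simp
    qed
    finally show "(mat_adjoint ?W * ?W) $$ (i, j) = 1\<^sub>m n $$ (i,j)" .
  qed (use W in auto)
qed

definition mat_cons_diag :: "complex \<Rightarrow> complex mat \<Rightarrow> complex mat" where
  "mat_cons_diag c M = mat (Suc (dim_row M)) (Suc (dim_col M)) (\<lambda>(i,j).
     if i = 0 then (if j = 0 then c else 0) else if j = 0 then 0 else M $$ (i - 1, j - 1))"

lemma mat_cons_diag_dim[simp]:
  "dim_row (mat_cons_diag c M) = Suc (dim_row M)" "dim_col (mat_cons_diag c M) = Suc (dim_col M)"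
  by (auto simp: mat_cons_diag_def)

lemma index_mat_cons_diag:
  "i < Suc (dim_row M) \<Longrightarrow> j < Suc (dim_col M) \<Longrightarrow> mat_cons_diag c M $$ (i,j) =
   (if i = 0 then (if j = 0 then c else 0) else if j = 0 then 0 else M $$ (i - 1, j - 1))"
  by (simp add: mat_cons_diag_def)

lemma mat_cons_diag_mult:
  assumes "dim_col X = dim_row Y"
  shows "mat_cons_diag a X * mat_cons_diag b Y = mat_cons_diag (a*b) (X*Y)"
proof (rule eq_matI)
  fix i j assume "i < dim_row (mat_cons_diag (a*b) (X*Y))" "j < dim_col (mat_cons_diag (a*b) (X*Y))"
  then show "(mat_cons_diag a X * mat_cons_diag b Y) $$ (i,j) = mat_cons_diag (a*b) (X*Y) $$ (i,j)"
    using assms by (cases i; cases j)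
      (simp_all add: sum.lessThan_Suc_shift index_mat_cons_diag del: sum.lessThan_Suc)
qed auto

lemma mat_adjoint_mat_cons_diag:
  "mat_adjoint (mat_cons_diag c X) = mat_cons_diag (cnj c) (mat_adjoint X)"
  by (rule eq_matI) (auto simp: index_mat_cons_diag)

lemma unitary_mat_cons_diag: "unitary k U \<Longrightarrow> unitary (Suc k) (mat_cons_diag 1 U)"
proof -
  have "mat_cons_diag 1 (1\<^sub>m k) = 1\<^sub>m (Suc k)"
    by (rule eq_matI) (auto simp: index_mat_cons_diag)
  then show "unitary k U \<Longrightarrow> unitary (Suc k) (mat_cons_diag 1 U)"
    unfolding unitary_def by (auto simp: mat_adjoint_mat_cons_diag mat_cons_diag_mult)
qed

lemma diagonal_mat_cons_diag: "diagonal_mat X \<Longrightarrow> diagonal_mat (mat_cons_diag c X)"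
  unfolding diagonal_mat_def by (auto simp: index_mat_cons_diag)

lemma hermitian_unitary_conj:
  fixes A U :: "complex mat"
  assumes A: "A \<in> carrier_mat n n" and H: "mat_adjoint A = A" and U: "U \<in> carrier_mat n n"
  shows "mat_adjoint (mat_adjoint U * A * U) = mat_adjoint U * A * U"
proof -
  have "mat_adjoint (mat_adjoint U * A * U) = mat_adjoint U * (mat_adjoint A * U)"
    using A U by (simp add: mat_adjoint_mult carrier_matD[OF A] carrier_matD[OF U])
  then show ?thesis using A U H by (simp add: assoc_mult_mat[of "mat_adjoint U" n n])
qed

lemma unitary_with_eigenvector_col:
  fixes A :: "complex mat"
  assumes A: "A \<in> carrier_mat (Suc k) (Suc k)"
  shows "\<exists>W e. unitary (Suc k) W \<and> A *\<^sub>v col W 0 = e \<cdot>\<^sub>v col W 0"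
proof -
  let ?n = "Suc k"
  have "degree (char_poly A) = ?n" using degree_monic_char_poly[OF A] by auto
  hence "\<not> constant (poly (char_poly A))" by (simp add: constant_degree)
  then obtain e where "poly (char_poly A) e = 0" using fundamental_theorem_of_algebra by blast
  hence "eigenvalue A e" using eigenvalue_root_char_poly[OF A] by simp
  then have "eigenvector A (find_eigenvector A e) e" by (rule find_eigenvector[OF A])
  then obtain v where v: "v \<in> carrier_vec ?n" and v0: "v \<noteq> 0\<^sub>v ?n" and Av: "A *\<^sub>v v = e \<cdot>\<^sub>v v"
    unfolding eigenvector_def using A by auto
  obtain ws where ws: "set ws \<subseteq> carrier_vec ?n" "corthogonal ws" "length ws = ?n" "hd ws = v"
    using corthogonal_completion[OF v v0] by blast
  define W where "W = mat_of_cols ?n (map vec_normalize ws)"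
  have "ws ! 0 = v" using ws(3,4) by (cases ws) auto
  then have "col W 0 = vec_normalize v" unfolding W_def using ws v by (subst col_mat_of_cols) auto
  then have "A *\<^sub>v col W 0 = e \<cdot>\<^sub>v col W 0"
    unfolding vec_normalize_def using A v Av
    by (simp add: mult_mat_vec[OF A] smult_smult_assoc mult.commute)
  moreover have "unitary ?n W" unfolding W_def by (rule unitary_mat_of_normalized_cols[OF ws(1-3)])
  ultimately show ?thesis by blast
qed

lemma hermitian_deflation:
  fixes A :: "complex mat"
  assumes A: "A \<in> carrier_mat (Suc k) (Suc k)" and H: "mat_adjoint A = A"
  shows "\<exists>W e A'. unitary (Suc k) W \<and> A' \<in> carrier_mat k k \<and> mat_adjoint A' = A' \<and>
    mat_adjoint W * A * W = mat_cons_diag e A'"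
proof -
  let ?n = "Suc k"
  obtain W e where uW: "unitary ?n W" and AW: "A *\<^sub>v col W 0 = e \<cdot>\<^sub>v col W 0"
    using unitary_with_eigenvector_col[OF A] by blast
  have W: "W \<in> carrier_mat ?n ?n" and aW: "mat_adjoint W \<in> carrier_mat ?n ?n"
    using uW unitary_carrier by auto
  define B where "B = mat_adjoint W * A * W"
  have B: "B \<in> carrier_mat ?n ?n" unfolding B_def using W A by auto
  have HB: "mat_adjoint B = B" unfolding B_def by (rule hermitian_unitary_conj[OF A H W])
  have "col (A * W) 0 = e \<cdot>\<^sub>v col W 0"
    using A W AW by (subst col_mult2[of _ ?n ?n _ ?n]) auto
  then have "col B 0 = mat_adjoint W *\<^sub>v (e \<cdot>\<^sub>v col W 0)"
    unfolding B_def assoc_mult_mat[OF aW A W] using aW A W by (subst col_mult2[of _ ?n ?n _ ?n]) auto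
  also have "\<dots> = e \<cdot>\<^sub>v col (mat_adjoint W * W) 0"
    using aW W by (simp add: mult_mat_vec[OF aW, of "col W 0"] col_mult2[of _ ?n ?n _ ?n] carrier_vecI)
  finally have colB: "col B 0 = e \<cdot>\<^sub>v col (1\<^sub>m ?n) 0" using uW unfolding unitary_def by simp
  \<comment> \<open>the first column of \<open>B\<close> is \<open>e\<close> times a unit vector; by hermiticity so is the first row\<close>
  have Bi0: "B $$ (i,0) = (if i = 0 then e else 0)" if "i < ?n" for i
    using arg_cong[OF colB, of "\<lambda>x. x $ i"] that B by auto
  have B0j: "B $$ (0,j) = (if j = 0 then e else 0)" if "j < ?n" for j
  proof -
    have "B $$ (0,j) = cnj (B $$ (j,0))"
      using arg_cong[OF HB, of "\<lambda>M. M $$ (0,j)"] B that by simp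
    then show ?thesis using Bi0[OF that] Bi0[of 0] by (auto split: if_splits)
  qed
  define A' where "A' = mat k k (\<lambda>(i,j). B $$ (Suc i, Suc j))"
  have A': "A' \<in> carrier_mat k k" unfolding A'_def by auto
  have "B = mat_cons_diag e A'"
    by (rule eq_matI) (use B A' Bi0 B0j in \<open>auto simp: index_mat_cons_diag A'_def gr0_conv_Suc\<close>)
  moreover have "mat_adjoint A' = A'"
  proof (rule eq_matI)
    fix i j assume "i < dim_row A'" "j < dim_col A'"
    then show "mat_adjoint A' $$ (i,j) = A' $$ (i,j)"
      using A' B arg_cong[OF HB, of "\<lambda>M. M $$ (Suc i, Suc j)"] by (simp add: A'_def)
  qed (use A' in auto)
  ultimately show ?thesis using uW A' unfolding B_def by blast
qed

lemma hermitian_unitarily_diagonalizable: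
  fixes A :: "complex mat"
  assumes "A \<in> carrier_mat n n" "mat_adjoint A = A"
  shows "\<exists>U. unitary n U \<and> diagonal_mat (mat_adjoint U * A * U)"
  using assms
proof (induction n arbitrary: A)
  case 0
  then show ?case by (intro exI[of _ "1\<^sub>m 0"]) (auto simp: unitary_one diagonal_mat_def)
next
  case (Suc k)
  obtain W e A' where uW: "unitary (Suc k) W" and A': "A' \<in> carrier_mat k k" "mat_adjoint A' = A'"
    and WAW: "mat_adjoint W * A * W = mat_cons_diag e A'"
    using hermitian_deflation[OF Suc.prems] by blast
  obtain U' where uU': "unitary k U'" and dU': "diagonal_mat (mat_adjoint U' * A' * U')"
    using Suc.IH[OF A'] by blast
  define E where "E = mat_cons_diag 1 U'"
  have uE: "unitary (Suc k) E" unfolding E_def by (rule unitary_mat_cons_diag[OF uU'])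
  have W: "W \<in> carrier_mat (Suc k) (Suc k)" and E: "E \<in> carrier_mat (Suc k) (Suc k)"
    and U': "U' \<in> carrier_mat k k"
    using uW uE uU' unitary_carrier by auto
  have "mat_adjoint (W * E) * A * (W * E) = mat_adjoint E * (mat_adjoint W * A * W) * E"
    using W E Suc.prems(1) by (simp add: mat_adjoint_mult assoc_mult_mat5[of _ "Suc k"])
  also have "\<dots> = mat_cons_diag e (mat_adjoint U' * A' * U')"
    unfolding WAW E_def mat_adjoint_mat_cons_diag using U' A' by (simp add: mat_cons_diag_mult)
  finally show ?case
    using unitary_mult[OF uW uE] diagonal_mat_cons_diag[OF dU'] by metis
qed

section \<open>Unitary conjugates of real diagonal matrices\<close>

definition real_diag_mat :: "nat \<Rightarrow> (nat \<Rightarrow> real) \<Rightarrow> complex mat" where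
  "real_diag_mat n d = mat_diag n (\<lambda>i. complex_of_real (d i))"

lemma real_diag_mat_carrier[simp]: "real_diag_mat n d \<in> carrier_mat n n"
  by (simp add: real_diag_mat_def)

lemma real_diag_mat_dim[simp]: "dim_row (real_diag_mat n d) = n" "dim_col (real_diag_mat n d) = n"
  by (simp_all add: real_diag_mat_def mat_diag_def)

lemma index_real_diag_mat:
  "i < n \<Longrightarrow> j < n \<Longrightarrow> real_diag_mat n d $$ (i,j) = (if i = j then complex_of_real (d i) else 0)"
  by (simp add: real_diag_mat_def mat_diag_def)

lemma mat_adjoint_real_diag_mat[simp]: "mat_adjoint (real_diag_mat n d) = real_diag_mat n d"
  by (rule eq_matI) (auto simp: index_real_diag_mat)

lemma real_diag_mat_add: "real_diag_mat n f + real_diag_mat n g = real_diag_mat n (\<lambda>k. f k + g k)"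
  by (rule eq_matI) (auto simp: index_real_diag_mat)

lemma real_diag_mat_smult: "complex_of_real c \<cdot>\<^sub>m real_diag_mat n f = real_diag_mat n (\<lambda>k. c * f k)"
  by (rule eq_matI) (auto simp: index_real_diag_mat)

definition basis_proj :: "nat \<Rightarrow> nat \<Rightarrow> complex mat" where
  "basis_proj n k = real_diag_mat n (\<lambda>i. if i = k then 1 else 0)"

lemma basis_proj_carrier[simp]: "basis_proj n k \<in> carrier_mat n n"
  by (simp add: basis_proj_def)

lemma basis_proj_dim[simp]: "dim_row (basis_proj n k) = n" "dim_col (basis_proj n k) = n"
  by (simp_all add: basis_proj_def)

lemma unitary_conj_carrier[simp]:
  "U \<in> carrier_mat n n \<Longrightarrow> U * real_diag_mat n d * mat_adjoint U \<in> carrier_mat n n"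
  by (metis mat_adjoint_carrier real_diag_mat_carrier mult_carrier_mat)

lemma index_unitary_conj:
  assumes U: "U \<in> carrier_mat n n" and i: "i < n" and l: "l < n"
  shows "(U * real_diag_mat n d * mat_adjoint U) $$ (i,l) =
    (\<Sum>k<n. U $$ (i,k) * complex_of_real (d k) * cnj (U $$ (l,k)))"
proof -
  have "(U * real_diag_mat n d) $$ (i,k) = U $$ (i,k) * complex_of_real (d k)" if "k < n" for k
    using U i that by (simp add: index_real_diag_mat if_distrib cong: if_cong)
  then show ?thesis using U i l by (auto intro!: sum.cong)
qed

lemma hermitian_unitary_conj_diag:
  "U \<in> carrier_mat n n \<Longrightarrow>
   mat_adjoint (U * real_diag_mat n d * mat_adjoint U) = U * real_diag_mat n d * mat_adjoint U"
  using hermitian_unitary_conj[of "real_diag_mat n d" n "mat_adjoint U"] by simp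

lemma index_unitary_conj_diag:
  assumes "M \<in> carrier_mat n n" "i < n"
  shows "(M * real_diag_mat n d * mat_adjoint M) $$ (i,i) =
    complex_of_real (\<Sum>j<n. (cmod (M $$ (i,j)))\<^sup>2 * d j)"
proof -
  have entry: "M $$ (i,j) * complex_of_real (d j) * cnj (M $$ (i,j)) =
      complex_of_real ((cmod (M $$ (i,j)))\<^sup>2 * d j)" for j
  proof -
    have "M $$ (i,j) * cnj (M $$ (i,j)) = complex_of_real ((cmod (M $$ (i,j)))\<^sup>2)"
      by (rule complex_norm_square[symmetric])
    then show ?thesis by (simp only: mult_ac of_real_mult)
  qed
  show ?thesis unfolding index_unitary_conj[OF assms(1) assms(2) assms(2)] of_real_sum
    by (intro sum.cong refl) (rule entry)
qed

lemma unitary_conj_eq_real_diag_matI: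
  assumes uM: "unitary n M"
    and eq: "\<And>i j. i < n \<Longrightarrow> j < n \<Longrightarrow> M $$ (i,j) \<noteq> 0 \<Longrightarrow> d j = c i"
  shows "M * real_diag_mat n d * mat_adjoint M = real_diag_mat n c"
proof (rule eq_matI)
  have M: "M \<in> carrier_mat n n" and MM: "M * mat_adjoint M = 1\<^sub>m n"
    using uM unfolding unitary_def by auto
  fix i k assume "i < dim_row (real_diag_mat n c)" and "k < dim_col (real_diag_mat n c)"
  hence i: "i < n" and k: "k < n" by auto
  have "(M * real_diag_mat n d * mat_adjoint M) $$ (i,k) =
      (\<Sum>j<n. complex_of_real (c i) * (M $$ (i,j) * cnj (M $$ (k,j))))"
    unfolding index_unitary_conj[OF M i k] using eq i
    by (intro sum.cong refl) (auto simp: mult_ac)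
  also have "\<dots> = complex_of_real (c i) * (M * mat_adjoint M) $$ (i,k)"
    using M i k by (simp add: sum_distrib_left)
  also have "\<dots> = real_diag_mat n c $$ (i,k)" using MM i k by (simp add: index_real_diag_mat)
  finally show "(M * real_diag_mat n d * mat_adjoint M) $$ (i,k) = real_diag_mat n c $$ (i,k)" .
qed (use uM unitary_carrier in auto)

lemma cscalar_prod_mult_mat_vec:
  assumes C: "C \<in> carrier_mat n n" and v: "v \<in> carrier_vec n"
  shows "(C *\<^sub>v v) \<bullet>c v = (\<Sum>i<n. \<Sum>l<n. C $$ (i,l) * v $ l * cnj (v $ i))"
proof -
  have "(C *\<^sub>v v) $ i = (\<Sum>l<n. C $$ (i,l) * v $ l)" if "i < n" for i
    using C v that by (simp add: scalar_prod_def atLeast0LessThan)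
  then show ?thesis
    using v by (simp add: cscalar_prod_sum sum_distrib_right)
qed

lemma quadratic_form_unitary_conj:
  assumes U: "U \<in> carrier_mat n n" and v: "v \<in> carrier_vec n"
  shows "((U * real_diag_mat n d * mat_adjoint U) *\<^sub>v v) \<bullet>c v =
    complex_of_real (\<Sum>k<n. d k * (cmod (\<Sum>l<n. cnj (U $$ (l,k)) * v $ l))\<^sup>2)"
proof -
  define w where "w k = (\<Sum>l<n. cnj (U $$ (l,k)) * v $ l)" for k
  have "((U * real_diag_mat n d * mat_adjoint U) *\<^sub>v v) \<bullet>c v =
      (\<Sum>i<n. \<Sum>l<n. (U * real_diag_mat n d * mat_adjoint U) $$ (i,l) * v $ l * cnj (v $ i))"
    by (rule cscalar_prod_mult_mat_vec) (use U v in simp_all)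
  also have "\<dots> = (\<Sum>i<n. \<Sum>l<n. \<Sum>k<n.
      U $$ (i,k) * complex_of_real (d k) * cnj (U $$ (l,k)) * v $ l * cnj (v $ i))"
    using U by (intro sum.cong refl) (simp add: index_unitary_conj sum_distrib_right del: index_mult_mat_sum)
  also have "\<dots> = (\<Sum>i<n. \<Sum>k<n. \<Sum>l<n. U $$ (i,k) * complex_of_real (d k) * cnj (U $$ (l,k)) * v $ l * cnj (v $ i))"
    by (rule sum.cong[OF refl]) (rule sum.swap)
  also have "\<dots> = (\<Sum>k<n. \<Sum>i<n. \<Sum>l<n. U $$ (i,k) * complex_of_real (d k) * cnj (U $$ (l,k)) * v $ l * cnj (v $ i))"
    by (rule sum.swap)
  also have "\<dots> = (\<Sum>k<n. complex_of_real (d k) * (w k * cnj (w k)))"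
    unfolding w_def by (simp add: sum_product sum_distrib_left mult_ac)
  also have "\<dots> = complex_of_real (\<Sum>k<n. d k * (cmod (w k))\<^sup>2)"
    by (simp add: complex_norm_square[symmetric])
  finally show ?thesis unfolding w_def .
qed

lemma psd_unitary_conj:
  assumes "unitary n U" "\<And>k. k < n \<Longrightarrow> 0 \<le> d k"
  shows "psd_mat n (U * real_diag_mat n d * mat_adjoint U)"
  unfolding psd_mat_def hermitian_mat_def
proof (intro conjI ballI)
  have U: "U \<in> carrier_mat n n" using assms unitary_carrier by auto
  show "U * real_diag_mat n d * mat_adjoint U \<in> carrier_mat n n" using U by simp
  show "mat_adjoint (U * real_diag_mat n d * mat_adjoint U) = U * real_diag_mat n d * mat_adjoint U"
    using hermitian_unitary_conj_diag[OF U] .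
  fix v :: "complex vec" assume v: "v \<in> carrier_vec n"
  have "0 \<le> (\<Sum>k<n. d k * (cmod (\<Sum>l<n. cnj (U $$ (l,k)) * v $ l))\<^sup>2)"
    using assms(2) by (intro sum_nonneg) simp
  then show "0 \<le> Re (((U * real_diag_mat n d * mat_adjoint U) *\<^sub>v v) \<bullet>c v)"
    unfolding quadratic_form_unitary_conj[OF U v] by simp
qed

lemma psd_unitary_conj_nonneg:
  assumes "unitary n U" "psd_mat n (U * real_diag_mat n d * mat_adjoint U)" "k < n"
  shows "0 \<le> d k"
proof -
  have U: "U \<in> carrier_mat n n" using assms unitary_carrier by auto
  have aUU: "mat_adjoint U * U = 1\<^sub>m n" using assms unfolding unitary_def by auto
  have v: "col U k \<in> carrier_vec n" using U by (intro carrier_vecI) simp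
  \<comment> \<open>test the quadratic form on the \<open>k\<close>-th column of \<open>U\<close>, an eigenvector for \<open>d k\<close>\<close>
  have "(\<Sum>l<n. cnj (U $$ (l,j)) * col U k $ l) = (if j = k then 1 else 0)" if "j < n" for j
  proof -
    have "(\<Sum>l<n. cnj (U $$ (l,j)) * col U k $ l) = (mat_adjoint U * U) $$ (j,k)"
      using U that assms(3) by (simp add: mult.commute)
    then show ?thesis using aUU that assms(3) by simp
  qed
  then have "(\<Sum>j<n. d j * (cmod (\<Sum>l<n. cnj (U $$ (l,j)) * col U k $ l))\<^sup>2) =
      (\<Sum>j<n. if j = k then d k else 0)"
    by (intro sum.cong refl) simp
  also have "\<dots> = d k" using assms(3) by simp
  finally have "(\<Sum>j<n. d j * (cmod (\<Sum>l<n. cnj (U $$ (l,j)) * col U k $ l))\<^sup>2) = d k" .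
  then have "Re (((U * real_diag_mat n d * mat_adjoint U) *\<^sub>v col U k) \<bullet>c col U k) = d k"
    unfolding quadratic_form_unitary_conj[OF U v] by simp
  with assms(2) v show ?thesis unfolding psd_mat_def by metis
qed

lemma mtrace_unitary_conj:
  assumes "unitary n U"
  shows "mtrace (U * real_diag_mat n d * mat_adjoint U) = complex_of_real (\<Sum>k<n. d k)"
proof -
  have U: "U \<in> carrier_mat n n" using assms unitary_carrier by auto
  have col: "(\<Sum>i<n. cnj (U $$ (i,k)) * U $$ (i,k)) = 1" if "k < n" for k
  proof -
    have "(mat_adjoint U * U) $$ (k,k) = (\<Sum>i<n. cnj (U $$ (i,k)) * U $$ (i,k))"
      using U that by simp
    then show ?thesis using assms(1) that unfolding unitary_def by (simp del: index_mult_mat_sum)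
  qed
  have "mtrace (U * real_diag_mat n d * mat_adjoint U) =
      (\<Sum>i<n. \<Sum>k<n. U $$ (i,k) * complex_of_real (d k) * cnj (U $$ (i,k)))"
    unfolding mtrace_def using U by (simp add: index_unitary_conj del: index_mult_mat_sum)
  also have "\<dots> = (\<Sum>k<n. \<Sum>i<n. U $$ (i,k) * complex_of_real (d k) * cnj (U $$ (i,k)))"
    by (rule sum.swap)
  also have "\<dots> = (\<Sum>k<n. complex_of_real (d k) * (\<Sum>i<n. cnj (U $$ (i,k)) * U $$ (i,k)))"
    by (simp add: sum_distrib_left mult_ac)
  finally show ?thesis using col by simp
qed

lemma density_unitary_conj:
  assumes "unitary n U" "\<And>k. k < n \<Longrightarrow> 0 \<le> d k" "(\<Sum>k<n. d k) = 1"
  shows "density n (U * real_diag_mat n d * mat_adjoint U)"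
  unfolding density_def mtrace_unitary_conj[OF assms(1)] assms(3)
  using psd_unitary_conj[OF assms(1,2)] by simp

lemma density_real_diag_mat:
  "(\<And>k. k < n \<Longrightarrow> 0 \<le> d k) \<Longrightarrow> (\<Sum>k<n. d k) = 1 \<Longrightarrow> density n (real_diag_mat n d)"
  using density_unitary_conj[OF unitary_one, of n d] by simp

lemma hermitian_spectral_decomposition:
  assumes "hermitian_mat n A"
  shows "\<exists>U d. unitary n U \<and> A = U * real_diag_mat n d * mat_adjoint U"
proof -
  have A: "A \<in> carrier_mat n n" and H: "mat_adjoint A = A"
    using assms unfolding hermitian_mat_def by auto
  obtain U where uU: "unitary n U" and dg: "diagonal_mat (mat_adjoint U * A * U)"
    using hermitian_unitarily_diagonalizable[OF A H] by blast
  have U: "U \<in> carrier_mat n n" using uU unitary_carrier by auto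
  define D where "D = mat_adjoint U * A * U"
  have D: "D \<in> carrier_mat n n" unfolding D_def using U A by auto
  have HD: "mat_adjoint D = D" unfolding D_def by (rule hermitian_unitary_conj[OF A H U])
  define d where "d i = Re (D $$ (i,i))" for i
  have "D = real_diag_mat n d"
  proof (rule eq_matI)
    fix i j assume i: "i < dim_row (real_diag_mat n d)" and j: "j < dim_col (real_diag_mat n d)"
    have "D $$ (i,i) = cnj (D $$ (i,i))"
      using arg_cong[OF HD, of "\<lambda>M. M $$ (i,i)"] i D by simp
    then have "Im (D $$ (i,i)) = 0" by (metis cnj.simps(2) neg_equal_zero)
    then have "D $$ (i,i) = complex_of_real (d i)" unfolding d_def by (simp add: complex_eq_iff)
    then show "D $$ (i,j) = real_diag_mat n d $$ (i,j)"
      using dg i j D unfolding D_def diagonal_mat_def by (auto simp: index_real_diag_mat)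
  qed (use D in auto)
  moreover have "A = U * D * mat_adjoint U"
    unfolding D_def using unitary_conj_cancel[OF uU A] ..
  ultimately show ?thesis using uU by blast
qed

lemma density_spectral_decomposition:
  assumes "density n A"
  obtains U e where "unitary n U" "A = U * real_diag_mat n e * mat_adjoint U"
    "\<And>k. k < n \<Longrightarrow> 0 \<le> e k" "(\<Sum>k<n. e k) = 1"
proof -
  have h: "hermitian_mat n A" and psd: "psd_mat n A" and tr: "mtrace A = 1"
    using assms unfolding density_def psd_mat_def by auto
  obtain U e where uU: "unitary n U" and A: "A = U * real_diag_mat n e * mat_adjoint U"
    using hermitian_spectral_decomposition[OF h] by blast
  have "\<And>k. k < n \<Longrightarrow> 0 \<le> e k" using psd_unitary_conj_nonneg[OF uU] psd unfolding A by blast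
  moreover have "complex_of_real (\<Sum>k<n. e k) = 1"
    using mtrace_unitary_conj[OF uU, of e] tr unfolding A by simp
  then have "(\<Sum>k<n. e k) = 1" by (simp only: of_real_eq_1_iff)
  ultimately show thesis using that uU A by blast
qed

section \<open>Von Neumann entropy of a diagonalised matrix\<close>

definition plogp :: "real \<Rightarrow> real" where
  "plogp x = (if x = 0 then 0 else x * log 2 x)"

lemma plogp_0[simp]: "plogp 0 = 0"
  by (simp add: plogp_def)

lemma order_linear_factor: "order x [:-a, 1:] = (if x = a then 1 else 0)"
  using order_power_n_n[of a 1] by (auto intro!: order_0I)

lemma sum_order_prod_linear_factors:
  fixes es :: "complex list"
  shows "(\<Sum>x\<in>{x. poly (\<Prod>a\<leftarrow>es. [:-a,1:]) x = 0}. real (order x (\<Prod>a\<leftarrow>es. [:-a,1:])) * h x) =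
    (\<Sum>a\<leftarrow>es. h a)"
proof -
  have "(\<Sum>x\<in>S. real (order x (\<Prod>a\<leftarrow>es. [:-a,1:])) * h x) = (\<Sum>a\<leftarrow>es. h a)"
    if "finite S" "set es \<subseteq> S" for S
    using that(2)
  proof (induction es)
    case (Cons a es)
    let ?P = "\<Prod>a\<leftarrow>es. [:-a,1:]"
    have "?P \<noteq> 0" by (auto simp: prod_list_zero_iff)
    then have nz: "[:-a,1:] * ?P \<noteq> 0" by (simp only: mult_eq_0_iff) simp
    have "real (order x (\<Prod>a\<leftarrow>a#es. [:-a,1:])) * h x =
        (if x = a then h x else 0) + real (order x ?P) * h x" for x
      by (simp only: list.map prod_list.Cons order_mult[OF nz] order_linear_factor)
        (simp add: algebra_simps)
    then show ?case using Cons that(1) by (simp add: sum.distrib)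
  qed (simp add: order_0I)
  moreover have "{x. poly (\<Prod>a\<leftarrow>es. [:-a,1:]) x = 0} = set es"
    by (induction es) auto
  ultimately show ?thesis by simp
qed

lemma vn_entropy_unitary_conj:
  assumes uU: "unitary n U"
  shows "vn_entropy (U * real_diag_mat n d * mat_adjoint U) = - (\<Sum>i<n. plogp (d i))"
proof -
  have U: "U \<in> carrier_mat n n" and aU: "mat_adjoint U \<in> carrier_mat n n"
    using uU unitary_carrier by auto
  let ?A = "U * real_diag_mat n d * mat_adjoint U"
  have A: "?A \<in> carrier_mat n n" using U by auto
  have "similar_mat ?A (real_diag_mat n d)"
    unfolding similar_mat_def similar_mat_wit_def
    using A U aU uU unfolding unitary_def by (intro exI[of _ U] exI[of _ "mat_adjoint U"]) auto
  hence "char_poly ?A = char_poly (real_diag_mat n d)" by (rule char_poly_similar)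
  also have "\<dots> = (\<Prod>a\<leftarrow>diag_mat (real_diag_mat n d). [:- a, 1:])"
    by (rule char_poly_upper_triangular[of _ n]) (auto simp: upper_triangular_def index_real_diag_mat)
  also have "diag_mat (real_diag_mat n d) = map (\<lambda>i. complex_of_real (d i)) [0..<n]"
    by (simp add: diag_mat_def index_real_diag_mat)
  finally have cp: "char_poly ?A = (\<Prod>a\<leftarrow>map (\<lambda>i. complex_of_real (d i)) [0..<n]. [:- a, 1:])" .
  have ev: "{x. eigenvalue ?A x} = {x. poly (char_poly ?A) x = 0}"
    using eigenvalue_root_char_poly[OF A] by auto
  show ?thesis
    unfolding vn_entropy_def ev cp sum_order_prod_linear_factors
    by (auto simp: plogp_def sum_list_map_eq_sum_count atLeast0LessThan[symmetric]
        sum_set_upt_conv_sum_list_nat[symmetric] comp_def intro!: sum.cong)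
qed

lemma vn_entropy_real_diag_mat: "vn_entropy (real_diag_mat n d) = - (\<Sum>i<n. plogp (d i))"
  using vn_entropy_unitary_conj[OF unitary_one, of n d] by simp


section \<open>Convexity of \<open>x log x\<close>\<close>

lemma plogp_ge_tangent:
  assumes a: "a > 0" and x: "x \<ge> 0"
  shows "plogp a + (log 2 a + 1 / ln 2) * (x - a) \<le> plogp x"
    and "x \<noteq> a \<Longrightarrow> plogp a + (log 2 a + 1 / ln 2) * (x - a) < plogp x"
proof -
  \<comment> \<open>after multiplying by \<open>ln 2\<close> this is \<open>ln (a/x) \<le> a/x - 1\<close>, strict unless \<open>x = a\<close>\<close>
  have tangent: "plogp a + (log 2 a + 1 / ln 2) * (x - a) = (x * ln a + (x - a)) / ln 2"
    using a unfolding plogp_def log_def by (simp add: field_simps)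
  have at_x: "plogp x = (if x = 0 then 0 else x * ln x) / ln 2"
    unfolding plogp_def log_def by simp
  have le: "x * ln a + (x - a) \<le> (if x = 0 then 0 else x * ln x)"
    and less: "x \<noteq> a \<Longrightarrow> x * ln a + (x - a) < (if x = 0 then 0 else x * ln x)"
  proof -
    consider "x = 0" | "x > 0" using x by linarith
    then have "x * ln a + (x - a) \<le> (if x = 0 then 0 else x * ln x) \<and>
        (x \<noteq> a \<longrightarrow> x * ln a + (x - a) < (if x = 0 then 0 else x * ln x))"
    proof cases
      case 1
      then show ?thesis using a by simp
    next
      case 2
      have "x * ln a + (x - a) - x * ln x = x * (ln (a/x) - (a/x - 1))"
        using 2 a by (simp add: ln_div field_simps)
      moreover have "ln (a/x) \<le> a/x - 1" using ln_le_minus_one[of "a/x"] a 2 by simp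
      moreover have "x \<noteq> a \<Longrightarrow> ln (a/x) < a/x - 1"
        using ln_le_minus_one[of "a/x"] ln_eq_minus_one[of "a/x"] a 2 by fastforce
      moreover have "x * (ln (a/x) - (a/x - 1)) \<le> 0"
        using 2 \<open>ln (a/x) \<le> a/x - 1\<close> by (intro mult_nonneg_nonpos) auto
      moreover have "x \<noteq> a \<Longrightarrow> x * (ln (a/x) - (a/x - 1)) < 0"
        using 2 \<open>x \<noteq> a \<Longrightarrow> ln (a/x) < a/x - 1\<close> by (intro mult_pos_neg) auto
      ultimately show ?thesis using 2 by auto
    qed
    then show "x * ln a + (x - a) \<le> (if x = 0 then 0 else x * ln x)"
      and "x \<noteq> a \<Longrightarrow> x * ln a + (x - a) < (if x = 0 then 0 else x * ln x)" by auto
  qed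
  show "plogp a + (log 2 a + 1 / ln 2) * (x - a) \<le> plogp x"
    unfolding tangent at_x using le by (simp add: divide_right_mono)
  show "x \<noteq> a \<Longrightarrow> plogp a + (log 2 a + 1 / ln 2) * (x - a) < plogp x"
    unfolding tangent at_x using less by (simp add: divide_strict_right_mono)
qed

lemma plogp_jensen:
  fixes w x :: "'i \<Rightarrow> real"
  assumes I: "finite I" and w: "\<And>j. j \<in> I \<Longrightarrow> 0 \<le> w j" and sw: "sum w I = 1"
    and x: "\<And>j. j \<in> I \<Longrightarrow> 0 \<le> x j"
  shows "plogp (\<Sum>j\<in>I. w j * x j) \<le> (\<Sum>j\<in>I. w j * plogp (x j))"
    and "plogp (\<Sum>j\<in>I. w j * x j) = (\<Sum>j\<in>I. w j * plogp (x j)) \<Longrightarrow> j \<in> I \<Longrightarrow> 0 < w j \<Longrightarrow>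
      x j = (\<Sum>j\<in>I. w j * x j)"
proof -
  define a where "a = (\<Sum>j\<in>I. w j * x j)"
  have "0 \<le> a" unfolding a_def using w x by (intro sum_nonneg) auto
  then consider "a = 0" | "a > 0" by linarith
  then have "plogp a \<le> (\<Sum>j\<in>I. w j * plogp (x j)) \<and>
      (plogp a = (\<Sum>j\<in>I. w j * plogp (x j)) \<longrightarrow> (\<forall>j\<in>I. 0 < w j \<longrightarrow> x j = a))"
  proof cases
    case 1
    then have "\<forall>j\<in>I. w j * x j = 0"
      using sum_nonneg_eq_0_iff[OF I, of "\<lambda>j. w j * x j"] w x unfolding a_def by simp
    then have "\<forall>j\<in>I. w j = 0 \<or> x j = 0" by simp
    then have "(\<Sum>j\<in>I. w j * plogp (x j)) = 0" by (auto intro!: sum.neutral)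
    then show ?thesis using \<open>\<forall>j\<in>I. w j = 0 \<or> x j = 0\<close> 1 by auto
  next
    case 2
    \<comment> \<open>average the tangent line of \<open>plogp\<close> at \<open>a\<close>\<close>
    define c where "c = log 2 a + 1 / ln 2"
    define t where "t y = plogp a + c * (y - a)" for y
    have tangent: "w j * t (x j) \<le> w j * plogp (x j)" if "j \<in> I" for j
      using plogp_ge_tangent(1)[OF 2 x[OF that]] w[OF that] unfolding t_def c_def
      by (rule mult_left_mono)
    have "(\<Sum>j\<in>I. w j * t (x j)) = (\<Sum>j\<in>I. plogp a * w j + c * (w j * x j) - c * a * w j)"
      unfolding t_def by (intro sum.cong refl) (simp add: algebra_simps)
    also have "\<dots> = plogp a * sum w I + c * a - c * a * sum w I"
      unfolding a_def by (simp add: sum_subtractf sum.distrib sum_distrib_left)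
    finally have avg: "(\<Sum>j\<in>I. w j * t (x j)) = plogp a" using sw by simp
    have "(\<Sum>j\<in>I. w j * t (x j)) \<le> (\<Sum>j\<in>I. w j * plogp (x j))"
      by (rule sum_mono) (rule tangent)
    then have "plogp a \<le> (\<Sum>j\<in>I. w j * plogp (x j))" unfolding avg .
    moreover have "\<forall>j\<in>I. 0 < w j \<longrightarrow> x j = a" if eq: "plogp a = (\<Sum>j\<in>I. w j * plogp (x j))"
    proof (intro ballI impI)
      fix j assume j: "j \<in> I" and wj: "0 < w j"
      have "(\<Sum>j\<in>I. w j * t (x j)) = (\<Sum>j\<in>I. w j * plogp (x j))" using avg eq by simp
      from sum_mono_inv[OF this tangent j I] have "w j * t (x j) = w j * plogp (x j)" .
      then have "t (x j) = plogp (x j)" using wj by simp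
      then show "x j = a"
        using plogp_ge_tangent(2)[OF 2 x[OF j]] unfolding t_def c_def by (cases "x j = a") auto
    qed
    ultimately show ?thesis by blast
  qed
  then show "plogp (\<Sum>j\<in>I. w j * x j) \<le> (\<Sum>j\<in>I. w j * plogp (x j))"
    and "plogp (\<Sum>j\<in>I. w j * x j) = (\<Sum>j\<in>I. w j * plogp (x j)) \<Longrightarrow> j \<in> I \<Longrightarrow> 0 < w j \<Longrightarrow>
      x j = (\<Sum>j\<in>I. w j * x j)"
    unfolding a_def by blast+
qed

lemma plogp_convex_two:
  assumes "0 \<le> p" "0 \<le> q" "p + q = 1" "0 \<le> a" "0 \<le> b"
  shows "plogp (p * a + q * b) \<le> p * plogp a + q * plogp b"
    and "plogp (p * a + q * b) = p * plogp a + q * plogp b \<Longrightarrow> 0 < p \<Longrightarrow> 0 < q \<Longrightarrow> a = b"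
proof -
  let ?w = "\<lambda>j::bool. if j then p else q" and ?x = "\<lambda>j::bool. if j then a else b"
  have sums: "(\<Sum>j\<in>UNIV. ?w j * ?x j) = p * a + q * b" "(\<Sum>j\<in>UNIV. ?w j * plogp (?x j)) = p * plogp a + q * plogp b"
    "sum ?w UNIV = 1"
    using assms(3) by (simp_all add: UNIV_bool)
  have "\<And>j. 0 \<le> ?w j" "\<And>j. 0 \<le> ?x j" using assms by simp_all
  note jensen = plogp_jensen[of UNIV ?w ?x, unfolded sums, OF _ this(1) refl this(2)]
  show "plogp (p * a + q * b) \<le> p * plogp a + q * plogp b"
    using jensen(1) assms by simp
  show "a = b" if "plogp (p * a + q * b) = p * plogp a + q * plogp b" "0 < p" "0 < q"
    using jensen(2)[OF _ that(1), of True] jensen(2)[OF _ that(1), of False] that by simp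
qed

lemma plogp_mult:
  assumes "0 \<le> p" "0 \<le> x"
  shows "plogp (p * x) = p * plogp x + x * plogp p"
  using assms by (auto simp: plogp_def log_mult algebra_simps)

lemma binary_entropy_le_one:
  assumes "0 \<le> p" "0 \<le> q" "p + q = 1"
  shows "- plogp p - plogp q \<le> 1" and "- plogp p - plogp q = 1 \<Longrightarrow> p = 1/2"
proof -
  \<comment> \<open>the tangent lines of \<open>plogp\<close> at \<open>1/2\<close>, evaluated at \<open>p\<close> and \<open>q\<close>, add up to \<open>-1\<close>\<close>
  have h: "(1/2::real) > 0" by simp
  define c where "c = log 2 (1/2) + 1 / ln (2::real)"
  note T1 = plogp_ge_tangent[OF h assms(1), folded c_def]
    and T2 = plogp_ge_tangent[OF h assms(2), folded c_def]
  have "plogp (1/2) = - 1/2" unfolding plogp_def by (simp add: log_divide)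
  then have "(plogp (1/2) + c * (p - 1/2)) + (plogp (1/2) + c * (q - 1/2)) = -1 + c * (p + q - 1)"
    by (simp add: algebra_simps)
  then have sum: "(plogp (1/2) + c * (p - 1/2)) + (plogp (1/2) + c * (q - 1/2)) = -1"
    using assms(3) by simp
  show "- plogp p - plogp q \<le> 1" using T1(1) T2(1) sum by linarith
  show "p = 1/2" if "- plogp p - plogp q = 1"
  proof (rule ccontr)
    assume "p \<noteq> 1/2"
    then show False using T1(2) T2(1) sum that by linarith
  qed
qed

section \<open>Concavity of the von Neumann entropy\<close>

lemma plogp_doubly_stochastic:
  fixes w :: "nat \<Rightarrow> nat \<Rightarrow> real" and d :: "nat \<Rightarrow> real"
  assumes w: "\<And>i j. i < n \<Longrightarrow> j < n \<Longrightarrow> 0 \<le> w i j"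
    and rows: "\<And>i. i < n \<Longrightarrow> (\<Sum>j<n. w i j) = 1"
    and cols: "\<And>j. j < n \<Longrightarrow> (\<Sum>i<n. w i j) = 1"
    and d: "\<And>j. j < n \<Longrightarrow> 0 \<le> d j"
  shows "(\<Sum>i<n. plogp (\<Sum>j<n. w i j * d j)) \<le> (\<Sum>j<n. plogp (d j))"
    and "(\<Sum>i<n. plogp (\<Sum>j<n. w i j * d j)) = (\<Sum>j<n. plogp (d j)) \<Longrightarrow>
      i < n \<Longrightarrow> j < n \<Longrightarrow> 0 < w i j \<Longrightarrow> d j = (\<Sum>j<n. w i j * d j)"
proof -
  have jensen: "plogp (\<Sum>j<n. w i j * d j) \<le> (\<Sum>j<n. w i j * plogp (d j))" if "i < n" for i
    by (rule plogp_jensen(1)) (use w rows d that in auto)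
  have "(\<Sum>i<n. \<Sum>j<n. w i j * plogp (d j)) = (\<Sum>j<n. (\<Sum>i<n. w i j) * plogp (d j))"
    by (subst sum.swap) (simp add: sum_distrib_right)
  also have "\<dots> = (\<Sum>j<n. plogp (d j))" using cols by simp
  finally have total: "(\<Sum>i<n. \<Sum>j<n. w i j * plogp (d j)) = (\<Sum>j<n. plogp (d j))" .
  have le: "(\<Sum>i<n. plogp (\<Sum>j<n. w i j * d j)) \<le> (\<Sum>i<n. \<Sum>j<n. w i j * plogp (d j))"
    by (rule sum_mono) (auto intro: jensen)
  then show "(\<Sum>i<n. plogp (\<Sum>j<n. w i j * d j)) \<le> (\<Sum>j<n. plogp (d j))"
    unfolding total .
  assume eq: "(\<Sum>i<n. plogp (\<Sum>j<n. w i j * d j)) = (\<Sum>j<n. plogp (d j))"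
    and ij: "i < n" "j < n" "0 < w i j"
  have "(\<Sum>i<n. plogp (\<Sum>j<n. w i j * d j)) = (\<Sum>i<n. \<Sum>j<n. w i j * plogp (d j))"
    unfolding eq total ..
  then have row_eq: "plogp (\<Sum>j<n. w i j * d j) = (\<Sum>j<n. w i j * plogp (d j))"
    by (rule sum_mono_inv) (auto intro: jensen simp: ij)
  show "d j = (\<Sum>j<n. w i j * d j)"
    by (rule plogp_jensen(2)[of "{..<n}" "w i" d, OF _ _ _ _ row_eq]) (use w rows d ij in auto)
qed

lemma plogp_mixture:
  fixes a b :: "nat \<Rightarrow> real"
  assumes p: "0 \<le> p1" "0 \<le> p2" "p1 + p2 = 1"
    and ab: "\<And>i. i < n \<Longrightarrow> 0 \<le> a i" "\<And>i. i < n \<Longrightarrow> 0 \<le> b i"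
  shows "(\<Sum>i<n. plogp (p1 * a i + p2 * b i)) \<le> p1 * (\<Sum>i<n. plogp (a i)) + p2 * (\<Sum>i<n. plogp (b i))"
    and "(\<Sum>i<n. plogp (p1 * a i + p2 * b i)) = p1 * (\<Sum>i<n. plogp (a i)) + p2 * (\<Sum>i<n. plogp (b i)) \<Longrightarrow>
      0 < p1 \<Longrightarrow> 0 < p2 \<Longrightarrow> i < n \<Longrightarrow> a i = b i"
proof -
  have split: "p1 * (\<Sum>i<n. plogp (a i)) + p2 * (\<Sum>i<n. plogp (b i)) =
      (\<Sum>i<n. p1 * plogp (a i) + p2 * plogp (b i))"
    by (simp add: sum.distrib sum_distrib_left)
  note convex = plogp_convex_two[OF p ab(1) ab(2)]
  show "(\<Sum>i<n. plogp (p1 * a i + p2 * b i)) \<le> p1 * (\<Sum>i<n. plogp (a i)) + p2 * (\<Sum>i<n. plogp (b i))"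
    unfolding split by (rule sum_mono) (auto intro: convex(1))
  assume eq: "(\<Sum>i<n. plogp (p1 * a i + p2 * b i)) = p1 * (\<Sum>i<n. plogp (a i)) + p2 * (\<Sum>i<n. plogp (b i))"
    and pos: "0 < p1" "0 < p2" and i: "i < n"
  from eq have "plogp (p1 * a i + p2 * b i) = p1 * plogp (a i) + p2 * plogp (b i)"
    unfolding split by (rule sum_mono_inv) (auto intro: convex(1) simp: i)
  then show "a i = b i" using convex(2) pos i by blast
qed

text \<open>The squared moduli of the entries of a unitary matrix form a doubly stochastic matrix, so
  the diagonal of a unitary conjugate of a diagonal matrix is majorised by its eigenvalues.\<close>

lemma plogp_diag_unitary_conj:
  assumes uM: "unitary n M" and d: "\<And>j. j < n \<Longrightarrow> 0 \<le> d j"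
    and c: "\<And>i. c i = (\<Sum>j<n. (cmod (M $$ (i,j)))\<^sup>2 * d j)"
  shows "\<And>i. i < n \<Longrightarrow> 0 \<le> c i"
    and "(\<Sum>i<n. plogp (c i)) \<le> (\<Sum>j<n. plogp (d j))"
    and "(\<Sum>i<n. plogp (c i)) = (\<Sum>j<n. plogp (d j)) \<Longrightarrow>
      M * real_diag_mat n d * mat_adjoint M = real_diag_mat n c"
proof -
  define w where "w i j = (cmod (M $$ (i,j)))\<^sup>2" for i j
  have c': "c i = (\<Sum>j<n. w i j * d j)" for i unfolding c w_def ..
  have w: "\<And>i j. i < n \<Longrightarrow> j < n \<Longrightarrow> 0 \<le> w i j"
      "\<And>i. i < n \<Longrightarrow> (\<Sum>j<n. w i j) = 1" "\<And>j. j < n \<Longrightarrow> (\<Sum>i<n. w i j) = 1"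
    unfolding w_def using unitary_row_norm[OF uM] unitary_col_norm[OF uM] by auto
  show "\<And>i. i < n \<Longrightarrow> 0 \<le> c i" unfolding c' using w d by (auto intro!: sum_nonneg)
  show "(\<Sum>i<n. plogp (c i)) \<le> (\<Sum>j<n. plogp (d j))"
    unfolding c' by (rule plogp_doubly_stochastic(1)) (use w d in auto)
  assume "(\<Sum>i<n. plogp (c i)) = (\<Sum>j<n. plogp (d j))"
  then have "d j = c i" if "i < n" "j < n" "0 < w i j" for i j
    using that unfolding c' by (intro plogp_doubly_stochastic(2)[of n w d]) (use w d in auto)
  then show "M * real_diag_mat n d * mat_adjoint M = real_diag_mat n c"
    unfolding w_def by (intro unitary_conj_eq_real_diag_matI[OF uM]) auto
qed

lemma plogp_sum_unitary_mixture:
  assumes uM1: "unitary n M1" and uM2: "unitary n M2"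
    and d1: "\<And>j. j < n \<Longrightarrow> 0 \<le> d1 j" and d2: "\<And>j. j < n \<Longrightarrow> 0 \<le> d2 j"
    and p: "0 \<le> p1" "0 \<le> p2" "p1 + p2 = 1"
    and s: "real_diag_mat n s = complex_of_real p1 \<cdot>\<^sub>m (M1 * real_diag_mat n d1 * mat_adjoint M1)
      + complex_of_real p2 \<cdot>\<^sub>m (M2 * real_diag_mat n d2 * mat_adjoint M2)"
  shows "(\<Sum>i<n. plogp (s i)) \<le> p1 * (\<Sum>j<n. plogp (d1 j)) + p2 * (\<Sum>j<n. plogp (d2 j))"
    and "(\<Sum>i<n. plogp (s i)) = p1 * (\<Sum>j<n. plogp (d1 j)) + p2 * (\<Sum>j<n. plogp (d2 j)) \<Longrightarrow>
      0 < p1 \<Longrightarrow> 0 < p2 \<Longrightarrow>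
      M1 * real_diag_mat n d1 * mat_adjoint M1 = M2 * real_diag_mat n d2 * mat_adjoint M2"
proof -
  define c1 where "c1 i = (\<Sum>j<n. (cmod (M1 $$ (i,j)))\<^sup>2 * d1 j)" for i
  define c2 where "c2 i = (\<Sum>j<n. (cmod (M2 $$ (i,j)))\<^sup>2 * d2 j)" for i
  note diag1 = plogp_diag_unitary_conj[OF uM1 d1 c1_def]
    and diag2 = plogp_diag_unitary_conj[OF uM2 d2 c2_def]
  have "s i = p1 * c1 i + p2 * c2 i" if i: "i < n" for i
  proof -
    have "complex_of_real (s i) = real_diag_mat n s $$ (i,i)" using i by (simp add: index_real_diag_mat)
    also have "\<dots> = complex_of_real (p1 * c1 i + p2 * c2 i)"
      unfolding s using i unitary_carrier[OF uM1] unitary_carrier[OF uM2]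
      by (simp add: index_unitary_conj_diag c1_def c2_def del: index_mult_mat_sum)
    finally show ?thesis by (simp only: of_real_eq_iff)
  qed
  then have S: "(\<Sum>i<n. plogp (s i)) = (\<Sum>i<n. plogp (p1 * c1 i + p2 * c2 i))" by simp
  have mix: "(\<Sum>i<n. plogp (p1 * c1 i + p2 * c2 i)) \<le>
      p1 * (\<Sum>i<n. plogp (c1 i)) + p2 * (\<Sum>i<n. plogp (c2 i))"
    by (rule plogp_mixture(1)[OF p diag1(1) diag2(1)])
  have le1: "p1 * (\<Sum>i<n. plogp (c1 i)) \<le> p1 * (\<Sum>j<n. plogp (d1 j))"
    and le2: "p2 * (\<Sum>i<n. plogp (c2 i)) \<le> p2 * (\<Sum>j<n. plogp (d2 j))"
    using diag1(2) diag2(2) p by (auto intro: mult_left_mono)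
  show "(\<Sum>i<n. plogp (s i)) \<le> p1 * (\<Sum>j<n. plogp (d1 j)) + p2 * (\<Sum>j<n. plogp (d2 j))"
    using mix le1 le2 unfolding S by linarith
  assume eq: "(\<Sum>i<n. plogp (s i)) = p1 * (\<Sum>j<n. plogp (d1 j)) + p2 * (\<Sum>j<n. plogp (d2 j))"
    and pos: "0 < p1" "0 < p2"
  have "p1 * (\<Sum>i<n. plogp (c1 i)) = p1 * (\<Sum>j<n. plogp (d1 j))"
    and "p2 * (\<Sum>i<n. plogp (c2 i)) = p2 * (\<Sum>j<n. plogp (d2 j))"
    and mix_eq: "(\<Sum>i<n. plogp (p1 * c1 i + p2 * c2 i)) =
      p1 * (\<Sum>i<n. plogp (c1 i)) + p2 * (\<Sum>i<n. plogp (c2 i))"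
    using mix le1 le2 eq unfolding S by linarith+
  then have "M1 * real_diag_mat n d1 * mat_adjoint M1 = real_diag_mat n c1"
    and "M2 * real_diag_mat n d2 * mat_adjoint M2 = real_diag_mat n c2"
    using diag1(3) diag2(3) pos by simp_all
  moreover have "c1 i = c2 i" if "i < n" for i
    by (rule plogp_mixture(2)[OF p diag1(1) diag2(1) mix_eq pos that])
  then have "real_diag_mat n c1 = real_diag_mat n c2"
    by (intro eq_matI) (auto simp: index_real_diag_mat)
  ultimately show "M1 * real_diag_mat n d1 * mat_adjoint M1 = M2 * real_diag_mat n d2 * mat_adjoint M2"
    by simp
qed

lemma psd_mat_convex_comb:
  assumes A: "psd_mat n A" and B: "psd_mat n B" and a: "0 \<le> a" and b: "0 \<le> b"
  shows "psd_mat n (complex_of_real a \<cdot>\<^sub>m A + complex_of_real b \<cdot>\<^sub>m B)"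
  unfolding psd_mat_def hermitian_mat_def
proof (intro conjI ballI)
  have Ac: "A \<in> carrier_mat n n" and Bc: "B \<in> carrier_mat n n"
    and HA: "mat_adjoint A = A" and HB: "mat_adjoint B = B"
    using A B unfolding psd_mat_def hermitian_mat_def by auto
  let ?C = "complex_of_real a \<cdot>\<^sub>m A + complex_of_real b \<cdot>\<^sub>m B"
  show C: "?C \<in> carrier_mat n n" using Ac Bc by simp
  show "mat_adjoint ?C = ?C" using Ac Bc HA HB by (simp add: mat_adjoint_add[of _ n n] mat_adjoint_smult)
  fix v :: "complex vec" assume v: "v \<in> carrier_vec n"
  have "(?C *\<^sub>v v) \<bullet>c v =
      complex_of_real a * ((A *\<^sub>v v) \<bullet>c v) + complex_of_real b * ((B *\<^sub>v v) \<bullet>c v)"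
    unfolding cscalar_prod_mult_mat_vec[OF C v] cscalar_prod_mult_mat_vec[OF Ac v]
      cscalar_prod_mult_mat_vec[OF Bc v]
    using Ac Bc by (simp add: algebra_simps sum.distrib sum_distrib_left)
  moreover have "0 \<le> Re ((A *\<^sub>v v) \<bullet>c v)" "0 \<le> Re ((B *\<^sub>v v) \<bullet>c v)"
    using A B v unfolding psd_mat_def by auto
  ultimately show "0 \<le> Re ((?C *\<^sub>v v) \<bullet>c v)" using a b by simp
qed

lemma density_convex_comb:
  assumes "density n \<rho>1" "density n \<rho>2" "0 \<le> p1" "0 \<le> p2" "p1 + p2 = 1"
  shows "density n (complex_of_real p1 \<cdot>\<^sub>m \<rho>1 + complex_of_real p2 \<cdot>\<^sub>m \<rho>2)"
proof -
  have "\<rho>1 \<in> carrier_mat n n" "\<rho>2 \<in> carrier_mat n n"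
    using assms unfolding density_def psd_mat_def hermitian_mat_def by auto
  then have "mtrace (complex_of_real p1 \<cdot>\<^sub>m \<rho>1 + complex_of_real p2 \<cdot>\<^sub>m \<rho>2) =
      complex_of_real p1 * mtrace \<rho>1 + complex_of_real p2 * mtrace \<rho>2"
    unfolding mtrace_def by (simp add: sum.distrib sum_distrib_left)
  then show ?thesis
    using assms psd_mat_convex_comb unfolding density_def by (simp flip: of_real_add)
qed

lemma unitary_conj_comb:
  fixes Q X Y :: "complex mat"
  assumes "Q \<in> carrier_mat n n" "X \<in> carrier_mat n n" "Y \<in> carrier_mat n n"
  shows "mat_adjoint Q * (a \<cdot>\<^sub>m X + b \<cdot>\<^sub>m Y) * Q =
    a \<cdot>\<^sub>m (mat_adjoint Q * X * Q) + b \<cdot>\<^sub>m (mat_adjoint Q * Y * Q)"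
proof -
  have Q: "mat_adjoint Q \<in> carrier_mat n n" using assms by simp
  have "mat_adjoint Q * (a \<cdot>\<^sub>m X + b \<cdot>\<^sub>m Y) = a \<cdot>\<^sub>m (mat_adjoint Q * X) + b \<cdot>\<^sub>m (mat_adjoint Q * Y)"
    using mult_add_distrib_mat[OF Q smult_carrier_mat[OF assms(2)] smult_carrier_mat[OF assms(3)]]
      mult_smult_distrib[OF Q assms(2)] mult_smult_distrib[OF Q assms(3)] by simp
  also have "\<dots> * Q = a \<cdot>\<^sub>m (mat_adjoint Q * X) * Q + b \<cdot>\<^sub>m (mat_adjoint Q * Y) * Q"
    using assms by (intro add_mult_distrib_mat[of _ n n]) auto
  also have "\<dots> = a \<cdot>\<^sub>m (mat_adjoint Q * X * Q) + b \<cdot>\<^sub>m (mat_adjoint Q * Y * Q)"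
    by (simp only: mult_smult_assoc_mat[OF mult_carrier_mat[OF Q assms(2)] assms(1)]
        mult_smult_assoc_mat[OF mult_carrier_mat[OF Q assms(3)] assms(1)])
  finally show ?thesis .
qed

lemma vn_entropy_concave:
  assumes \<rho>1: "density n \<rho>1" and \<rho>2: "density n \<rho>2" and p: "0 \<le> p1" "0 \<le> p2" "p1 + p2 = 1"
  shows "p1 * vn_entropy \<rho>1 + p2 * vn_entropy \<rho>2 \<le>
      vn_entropy (complex_of_real p1 \<cdot>\<^sub>m \<rho>1 + complex_of_real p2 \<cdot>\<^sub>m \<rho>2)"
    and "p1 * vn_entropy \<rho>1 + p2 * vn_entropy \<rho>2 =
      vn_entropy (complex_of_real p1 \<cdot>\<^sub>m \<rho>1 + complex_of_real p2 \<cdot>\<^sub>m \<rho>2) \<Longrightarrow>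
      0 < p1 \<Longrightarrow> 0 < p2 \<Longrightarrow> \<rho>1 = \<rho>2"
proof -
  let ?\<sigma> = "complex_of_real p1 \<cdot>\<^sub>m \<rho>1 + complex_of_real p2 \<cdot>\<^sub>m \<rho>2"
  obtain P1 d1 where uP1: "unitary n P1" and r1: "\<rho>1 = P1 * real_diag_mat n d1 * mat_adjoint P1"
    and d1: "\<And>k. k < n \<Longrightarrow> 0 \<le> d1 k" using density_spectral_decomposition[OF \<rho>1] by blast
  obtain P2 d2 where uP2: "unitary n P2" and r2: "\<rho>2 = P2 * real_diag_mat n d2 * mat_adjoint P2"
    and d2: "\<And>k. k < n \<Longrightarrow> 0 \<le> d2 k" using density_spectral_decomposition[OF \<rho>2] by blast
  obtain Q s where uQ: "unitary n Q" and rs: "?\<sigma> = Q * real_diag_mat n s * mat_adjoint Q"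
    using density_spectral_decomposition[OF density_convex_comb[OF \<rho>1 \<rho>2 p]] by blast
  have Q: "Q \<in> carrier_mat n n" and P1: "P1 \<in> carrier_mat n n" and P2: "P2 \<in> carrier_mat n n"
    using uQ uP1 uP2 unitary_carrier by auto
  \<comment> \<open>work in an eigenbasis of the mixture\<close>
  define M1 where "M1 = mat_adjoint Q * P1"
  define M2 where "M2 = mat_adjoint Q * P2"
  have conj: "mat_adjoint Q * (P * real_diag_mat n d * mat_adjoint P) * Q =
      (mat_adjoint Q * P) * real_diag_mat n d * mat_adjoint (mat_adjoint Q * P)"
    if "P \<in> carrier_mat n n" for P d
    using Q that by (simp add: mat_adjoint_mult assoc_mult_mat5[of _ n])
  have "real_diag_mat n s = mat_adjoint Q * ?\<sigma> * Q"
    unfolding rs using uQ unfolding unitary_def by (simp add: assoc_mult_mat5[of _ n])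
  also have "\<dots> = complex_of_real p1 \<cdot>\<^sub>m (M1 * real_diag_mat n d1 * mat_adjoint M1)
      + complex_of_real p2 \<cdot>\<^sub>m (M2 * real_diag_mat n d2 * mat_adjoint M2)"
    unfolding r1 r2 M1_def M2_def using Q P1 P2 by (simp add: unitary_conj_comb conj)
  finally have "real_diag_mat n s = complex_of_real p1 \<cdot>\<^sub>m (M1 * real_diag_mat n d1 * mat_adjoint M1)
      + complex_of_real p2 \<cdot>\<^sub>m (M2 * real_diag_mat n d2 * mat_adjoint M2)" .
  note mixture = plogp_sum_unitary_mixture[OF _ _ d1 d2 p this]
  have uM: "unitary n M1" "unitary n M2"
    unfolding M1_def M2_def using uQ uP1 uP2 by (auto intro: unitary_mult unitary_mat_adjoint)
  have S: "vn_entropy ?\<sigma> = - (\<Sum>i<n. plogp (s i))"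
    "vn_entropy \<rho>1 = - (\<Sum>j<n. plogp (d1 j))" "vn_entropy \<rho>2 = - (\<Sum>j<n. plogp (d2 j))"
    unfolding rs by (simp_all only: r1 r2 vn_entropy_unitary_conj[OF uQ] vn_entropy_unitary_conj[OF uP1]
        vn_entropy_unitary_conj[OF uP2])
  show "p1 * vn_entropy \<rho>1 + p2 * vn_entropy \<rho>2 \<le> vn_entropy ?\<sigma>"
    using mixture(1)[OF uM] unfolding S by simp
  assume "p1 * vn_entropy \<rho>1 + p2 * vn_entropy \<rho>2 = vn_entropy ?\<sigma>" "0 < p1" "0 < p2"
  then have "M1 * real_diag_mat n d1 * mat_adjoint M1 = M2 * real_diag_mat n d2 * mat_adjoint M2"
    using mixture(2)[OF uM] unfolding S by simp
  then show "\<rho>1 = \<rho>2"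
    unfolding r1 r2 using unitary_conj_cancel[OF uQ] conj P1 P2 unfolding M1_def M2_def
    by (metis unitary_conj_carrier)
qed

section \<open>Kronecker products\<close>

lemma kron_dim[simp]:
  "dim_row (kron A B) = dim_row A * dim_row B" "dim_col (kron A B) = dim_col A * dim_col B"
  by (auto simp: kron_def)

lemma kron_carrier[simp]:
  "A \<in> carrier_mat a a' \<Longrightarrow> B \<in> carrier_mat b b' \<Longrightarrow> kron A B \<in> carrier_mat (a*b) (a'*b')"
  by (intro carrier_matI) (simp_all add: carrier_matD)

lemma index_kron:
  "i < dim_row A * dim_row B \<Longrightarrow> j < dim_col A * dim_col B \<Longrightarrow>
   kron A B $$ (i,j) = A $$ (i div dim_row B, j div dim_col B) * B $$ (i mod dim_row B, j mod dim_col B)"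
  by (simp add: kron_def)

lemma mult_index_bounds:
  assumes "(i::nat) < a * b"
  shows "i div b < a" "i mod b < b"
proof -
  have "b \<noteq> 0" using assms by (cases b) auto
  then show "i div b < a" "i mod b < b" using assms by (simp_all add: less_mult_imp_div_less)
qed

lemma index_pair_less_mult:
  assumes "(k2::nat) < b" "k1 < a"
  shows "k1 * b + k2 < a * b"
proof -
  have "k1 * b + k2 < Suc k1 * b" using assms(1) by simp
  also have "\<dots> \<le> a * b" using assms(2) by (intro mult_right_mono) auto
  finally show ?thesis .
qed

lemma sum_lessThan_mult: "(\<Sum>k<a*b. f k) = (\<Sum>i<a. \<Sum>j<b. f (i*b + j :: nat))"
proof (induction a)
  case (Suc a)
  have "(\<Sum>k<Suc a * b. f k) = (\<Sum>k<a*b. f k) + (\<Sum>k\<in>{a*b..<a*b+b}. f k)"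
    by (simp add: sum.atLeastLessThan_concat atLeast0LessThan[symmetric] add.commute)
  also have "(\<Sum>k\<in>{a*b..<a*b+b}. f k) = (\<Sum>j<b. f (a*b + j))"
    using sum.shift_bounds_nat_ivl[of f 0 "a*b" b] by (simp add: atLeast0LessThan add.commute)
  finally show ?case using Suc by (simp add: add.commute)
qed simp

lemma kron_mult:
  assumes "dim_col A = dim_row C" "dim_col B = dim_row D"
  shows "kron A B * kron C D = kron (A * C) (B * D)"
proof (rule eq_matI)
  fix i j assume "i < dim_row (kron (A*C) (B*D))" and "j < dim_col (kron (A*C) (B*D))"
  then have i: "i < dim_row A * dim_row B" and j: "j < dim_col C * dim_col D" by auto
  have "(kron A B * kron C D) $$ (i,j) = (\<Sum>k1<dim_row C. \<Sum>k2<dim_row D.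
      kron A B $$ (i, k1 * dim_row D + k2) * kron C D $$ (k1 * dim_row D + k2, j))"
    using i j assms by (simp add: sum_lessThan_mult)
  also have "\<dots> = (\<Sum>k1<dim_row C. \<Sum>k2<dim_row D.
      (A $$ (i div dim_row B, k1) * C $$ (k1, j div dim_col D)) *
      (B $$ (i mod dim_row B, k2) * D $$ (k2, j mod dim_col D)))"
    using i j assms index_pair_less_mult
    by (intro sum.cong refl) (simp add: index_kron)
  also have "\<dots> = kron (A * C) (B * D) $$ (i,j)"
    using i j assms mult_index_bounds[OF i] mult_index_bounds[OF j]
    by (simp add: index_kron sum_product)
  finally show "(kron A B * kron C D) $$ (i,j) = kron (A * C) (B * D) $$ (i,j)" .
qed auto

lemma mat_adjoint_kron: "mat_adjoint (kron A B) = kron (mat_adjoint A) (mat_adjoint B)"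
proof (rule eq_matI)
  fix i j
  assume "i < dim_row (kron (mat_adjoint A) (mat_adjoint B))"
    and "j < dim_col (kron (mat_adjoint A) (mat_adjoint B))"
  then have i: "i < dim_col A * dim_col B" and j: "j < dim_row A * dim_row B" by auto
  show "mat_adjoint (kron A B) $$ (i,j) = kron (mat_adjoint A) (mat_adjoint B) $$ (i,j)"
    using i j mult_index_bounds[OF i] mult_index_bounds[OF j] by (simp add: index_kron)
qed auto

lemma kron_add_left:
  "A \<in> carrier_mat a a' \<Longrightarrow> B \<in> carrier_mat a a' \<Longrightarrow> kron (A + B) C = kron A C + kron B C"
  by (rule eq_matI) (auto simp: index_kron mult_index_bounds distrib_right)

lemma kron_add_right:
  "B \<in> carrier_mat b b' \<Longrightarrow> C \<in> carrier_mat b b' \<Longrightarrow> kron A (B + C) = kron A B + kron A C"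
  by (rule eq_matI) (auto simp: index_kron mult_index_bounds distrib_left)

lemma kron_smult_left: "kron (c \<cdot>\<^sub>m A) B = c \<cdot>\<^sub>m kron A B"
  by (rule eq_matI) (auto simp: index_kron mult_index_bounds)

lemma kron_zero_right: "kron A (0\<^sub>m b b') = 0\<^sub>m (dim_row A * b) (dim_col A * b')"
  by (rule eq_matI) (auto simp: index_kron mult_index_bounds)

lemma kron_real_diag_mat:
  "kron (real_diag_mat a d) (real_diag_mat b e) = real_diag_mat (a*b) (\<lambda>k. d (k div b) * e (k mod b))"
proof (rule eq_matI)
  fix i j assume "i < dim_row (real_diag_mat (a*b) (\<lambda>k. d (k div b) * e (k mod b)))"
    and "j < dim_col (real_diag_mat (a*b) (\<lambda>k. d (k div b) * e (k mod b)))"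
  then have i: "i < a * b" and j: "j < a * b" by auto
  have "(i div b = j div b \<and> i mod b = j mod b) = (i = j)"
    by (metis div_mult_mod_eq)
  then show "kron (real_diag_mat a d) (real_diag_mat b e) $$ (i,j) =
      real_diag_mat (a*b) (\<lambda>k. d (k div b) * e (k mod b)) $$ (i,j)"
    using i j mult_index_bounds[OF i] mult_index_bounds[OF j]
    by (auto simp: index_kron index_real_diag_mat)
qed auto

lemma kron_basis_proj:
  assumes "j < b"
  shows "kron (basis_proj a i) (basis_proj b j) = basis_proj (a*b) (i*b + j)"
proof -
  have "(if k div b = i then 1 else 0) * (if k mod b = j then 1 else 0) =
      (if k = i * b + j then 1 else (0::real))" for k
    using div_mult_mod_eq[of k b] assms by auto
  then show ?thesis
    unfolding basis_proj_def kron_real_diag_mat by simp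
qed

lemma kron_one: "kron (1\<^sub>m a) (1\<^sub>m b) = (1\<^sub>m (a * b) :: complex mat)"
  using kron_real_diag_mat[of a "\<lambda>_. 1" b "\<lambda>_. 1"]
  by (simp add: real_diag_mat_def mat_diag_def one_mat_def)

lemma unitary_kron:
  assumes "unitary a U" "unitary b V"
  shows "unitary (a*b) (kron U V)"
proof (rule unitaryI)
  have U: "U \<in> carrier_mat a a" and V: "V \<in> carrier_mat b b" using assms unitary_carrier by auto
  show "kron U V \<in> carrier_mat (a*b) (a*b)" using U V by simp
  have "mat_adjoint (kron U V) * kron U V = kron (mat_adjoint U * U) (mat_adjoint V * V)"
    unfolding mat_adjoint_kron using U V by (subst kron_mult) auto
  also have "\<dots> = 1\<^sub>m (a*b)" using assms unfolding unitary_def by (simp add: kron_one)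
  finally show "mat_adjoint (kron U V) * kron U V = 1\<^sub>m (a*b)" .
qed

lemma kron_unitary_conj:
  assumes U: "U \<in> carrier_mat a a" and V: "V \<in> carrier_mat b b"
  shows "kron (U * real_diag_mat a d * mat_adjoint U) (V * real_diag_mat b e * mat_adjoint V) =
     kron U V * real_diag_mat (a*b) (\<lambda>k. d (k div b) * e (k mod b)) * mat_adjoint (kron U V)"
  using U V by (simp add: kron_mult mat_adjoint_kron kron_real_diag_mat[symmetric])

lemma kron_assoc: "kron (kron A B) C = kron A (kron B C)"
proof (rule eq_matI)
  fix i j assume "i < dim_row (kron A (kron B C))" and "j < dim_col (kron A (kron B C))"
  then have i: "i < dim_row A * dim_row B * dim_row C" and j: "j < dim_col A * dim_col B * dim_col C"
    by (auto simp: mult.assoc)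
  have div_mod: "k div (y * z) = k div z div y" "k mod (y * z) div z = k div z mod y"
    "k mod (y * z) mod z = k mod z" if "0 < z" for k y z :: nat
    using that by (simp_all add: div_mult2_eq mod_mult2_eq mult.commute[of y z] mod_mod_cancel)
  have "0 < dim_row C" "0 < dim_col C" using i j by (auto intro: gr0I)
  then show "kron (kron A B) C $$ (i,j) = kron A (kron B C) $$ (i,j)"
    using i j mult_index_bounds[OF i] mult_index_bounds[OF j]
      mult_index_bounds[of i "dim_row A" "dim_row B * dim_row C"]
      mult_index_bounds[of j "dim_col A" "dim_col B * dim_col C"]
    by (simp add: index_kron div_mod mult.assoc)
qed (auto simp: mult.assoc)

lemma sum_lessThan_mult_div_mod:
  "(\<Sum>k<a*b. f (k div b) (k mod b)) = (\<Sum>i<a. \<Sum>j<b. f i (j::nat))"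
  unfolding sum_lessThan_mult by (intro sum.cong refl) simp

lemma density_kron:
  assumes "density a A" "density b B"
  shows "density (a*b) (kron A B)"
proof -
  obtain U d where "unitary a U" "A = U * real_diag_mat a d * mat_adjoint U"
    "\<And>k. k < a \<Longrightarrow> 0 \<le> d k" "(\<Sum>k<a. d k) = 1"
    using density_spectral_decomposition[OF assms(1)] by blast
  moreover obtain V e where "unitary b V" "B = V * real_diag_mat b e * mat_adjoint V"
    "\<And>k. k < b \<Longrightarrow> 0 \<le> e k" "(\<Sum>k<b. e k) = 1"
    using density_spectral_decomposition[OF assms(2)] by blast
  ultimately show ?thesis
    by (auto simp: kron_unitary_conj unitary_carrier mult_index_bounds
        sum_lessThan_mult_div_mod[of "\<lambda>i j. d i * e j"]
        sum_product[symmetric] intro!: density_unitary_conj unitary_kron)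
qed

lemma vn_entropy_kron:
  assumes "density a A" "density b B"
  shows "vn_entropy (kron A B) = vn_entropy A + vn_entropy B"
proof -
  obtain U d where uU: "unitary a U" and A: "A = U * real_diag_mat a d * mat_adjoint U"
    and d: "\<And>k. k < a \<Longrightarrow> 0 \<le> d k" "(\<Sum>k<a. d k) = 1"
    using density_spectral_decomposition[OF assms(1)] by blast
  obtain V e where uV: "unitary b V" and B: "B = V * real_diag_mat b e * mat_adjoint V"
    and e: "\<And>k. k < b \<Longrightarrow> 0 \<le> e k" "(\<Sum>k<b. e k) = 1"
    using density_spectral_decomposition[OF assms(2)] by blast
  have "(\<Sum>i<a. \<Sum>j<b. plogp (d i * e j)) = (\<Sum>i<a. \<Sum>j<b. d i * plogp (e j) + e j * plogp (d i))"
    using d e by (intro sum.cong refl) (simp add: plogp_mult)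
  also have "\<dots> = (\<Sum>j<b. plogp (e j)) + (\<Sum>i<a. plogp (d i))"
    using d(2) e(2) by (simp add: sum.distrib sum_distrib_left[symmetric] sum_distrib_right[symmetric]
        sum.swap[of _ "{..<a}"])
  finally have "(\<Sum>i<a. \<Sum>j<b. plogp (d i * e j)) = (\<Sum>i<a. plogp (d i)) + (\<Sum>j<b. plogp (e j))"
    by simp
  then show ?thesis
    unfolding A B using uU uV
    by (simp add: kron_unitary_conj unitary_carrier vn_entropy_unitary_conj unitary_kron
        sum_lessThan_mult_div_mod[of "\<lambda>i j. plogp (d i * e j)"])
qed

lemma kron_sum_mult:
  assumes "A1 \<in> carrier_mat a a" "A2 \<in> carrier_mat a a" "C1 \<in> carrier_mat a a" "C2 \<in> carrier_mat a a"
    "B1 \<in> carrier_mat b b" "B2 \<in> carrier_mat b b" "D1 \<in> carrier_mat b b" "D2 \<in> carrier_mat b b"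
  shows "(kron A1 B1 + kron A2 B2) * (kron C1 D1 + kron C2 D2) =
     (kron (A1*C1) (B1*D1) + kron (A1*C2) (B1*D2)) + (kron (A2*C1) (B2*D1) + kron (A2*C2) (B2*D2))"
proof -
  have k: "kron X Y \<in> carrier_mat (a*b) (a*b)" if "X \<in> carrier_mat a a" "Y \<in> carrier_mat b b" for X Y
    using that by simp
  note K = k[OF assms(1,5)] k[OF assms(2,6)] k[OF assms(3,7)] k[OF assms(4,8)]
  have "(kron A1 B1 + kron A2 B2) * (kron C1 D1 + kron C2 D2) =
      kron A1 B1 * (kron C1 D1 + kron C2 D2) + kron A2 B2 * (kron C1 D1 + kron C2 D2)"
    by (rule add_mult_distrib_mat[OF K(1) K(2) add_carrier_mat[OF K(4)]])
  also have "\<dots> = (kron A1 B1 * kron C1 D1 + kron A1 B1 * kron C2 D2)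
      + (kron A2 B2 * kron C1 D1 + kron A2 B2 * kron C2 D2)"
    using K by (simp add: mult_add_distrib_mat[of _ "a*b" "a*b"])
  finally show ?thesis using assms by (simp add: kron_mult)
qed

section \<open>Partial trace\<close>

lemma ptrace_last_dim[simp]:
  "dim_row (ptrace_last k A) = dim_row A div k" "dim_col (ptrace_last k A) = dim_col A div k"
  by (simp_all add: ptrace_last_def)

lemma div_mod_mult_add:
  assumes "(c::nat) < k"
  shows "(i * k + c) div (b * k) = i div b" "(i * k + c) mod (b * k) = i mod b * k + c"
proof -
  have div: "(i * k + c) div k = i" and mod: "(i * k + c) mod k = c" using assms by simp_all
  show "(i * k + c) div (b * k) = i div b"
    using div_mult2_eq[of "i * k + c" k b] div by (simp add: mult.commute)
  show "(i * k + c) mod (b * k) = i mod b * k + c"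
    using mod_mult2_eq[of "i * k + c" k b] div mod by (simp add: mult.commute)
qed

lemma ptrace_last_kron:
  assumes B: "B \<in> carrier_mat (b * k) (b * k)" and k: "0 < k"
  shows "ptrace_last k (kron A B) = kron A (ptrace_last k B)"
proof (rule eq_matI)
  fix i j assume "i < dim_row (kron A (ptrace_last k B))" "j < dim_col (kron A (ptrace_last k B))"
  then have i: "i < dim_row A * b" and j: "j < dim_col A * b" using B k by auto
  have "ptrace_last k (kron A B) $$ (i,j) = (\<Sum>c<k. kron A B $$ (i * k + c, j * k + c))"
    using i j B k by (simp add: ptrace_last_def mult.assoc)
  also have "\<dots> = (\<Sum>c<k. A $$ (i div b, j div b) * B $$ (i mod b * k + c, j mod b * k + c))"
  proof (intro sum.cong refl)
    fix c assume "c \<in> {..<k}"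
    then have "i * k + c < dim_row A * (b * k)" "j * k + c < dim_col A * (b * k)"
      using index_pair_less_mult[of c k i "dim_row A * b"] index_pair_less_mult[of c k j "dim_col A * b"] i j
      by (simp_all add: mult.assoc)
    then show "kron A B $$ (i * k + c, j * k + c) =
        A $$ (i div b, j div b) * B $$ (i mod b * k + c, j mod b * k + c)"
      using B \<open>c \<in> {..<k}\<close> by (simp add: index_kron div_mod_mult_add)
  qed
  also have "\<dots> = A $$ (i div b, j div b) * (\<Sum>c<k. B $$ (i mod b * k + c, j mod b * k + c))"
    by (simp add: sum_distrib_left)
  also have "\<dots> = kron A (ptrace_last k B) $$ (i,j)"
    using i j B k mult_index_bounds[OF i] mult_index_bounds[OF j] by (simp add: index_kron ptrace_last_def)
  finally show "ptrace_last k (kron A B) $$ (i,j) = kron A (ptrace_last k B) $$ (i,j)" .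
qed (use B k in \<open>simp_all add: mult.assoc\<close>)

lemma index_ptrace_bound: "(i::nat) < n div k \<Longrightarrow> c < k \<Longrightarrow> i * k + c < n"
  using index_pair_less_mult[of c k i "n div k"] div_times_less_eq_dividend[of n k] by linarith

lemma ptrace_last_comb:
  assumes "X \<in> carrier_mat n n" "Y \<in> carrier_mat n n"
  shows "ptrace_last k (a \<cdot>\<^sub>m X + b \<cdot>\<^sub>m Y) = a \<cdot>\<^sub>m ptrace_last k X + b \<cdot>\<^sub>m ptrace_last k Y"
proof (rule eq_matI)
  fix i j assume "i < dim_row (a \<cdot>\<^sub>m ptrace_last k X + b \<cdot>\<^sub>m ptrace_last k Y)"
    "j < dim_col (a \<cdot>\<^sub>m ptrace_last k X + b \<cdot>\<^sub>m ptrace_last k Y)"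
  then have i: "i < n div k" and j: "j < n div k" using assms by auto
  then show "ptrace_last k (a \<cdot>\<^sub>m X + b \<cdot>\<^sub>m Y) $$ (i,j) =
      (a \<cdot>\<^sub>m ptrace_last k X + b \<cdot>\<^sub>m ptrace_last k Y) $$ (i,j)"
    using assms index_ptrace_bound[OF i] index_ptrace_bound[OF j]
    by (simp add: ptrace_last_def sum.distrib sum_distrib_left)
qed (use assms in auto)

section \<open>Mixtures of the Bell states \<open>\<Psi>\<^sup>\<plusminus>\<close>\<close>

definition bell_mixture :: "real \<Rightarrow> complex mat \<Rightarrow> real \<Rightarrow> complex mat \<Rightarrow> complex mat" where
  "bell_mixture p1 \<rho>1 p2 \<rho>2 = complex_of_real p1 \<cdot>\<^sub>m kron \<rho>1 (proj psi_plus)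
     + complex_of_real p2 \<cdot>\<^sub>m kron \<rho>2 (proj psi_minus)"

lemma less4_cases: "(i::nat) < 4 \<Longrightarrow> (i = 0 \<Longrightarrow> P) \<Longrightarrow> (i = 1 \<Longrightarrow> P) \<Longrightarrow> (i = 2 \<Longrightarrow> P) \<Longrightarrow> (i = 3 \<Longrightarrow> P) \<Longrightarrow> P"
  by linarith

lemma sum_lessThan_4: "(\<Sum>k<(4::nat). f k) = f 0 + f 1 + f 2 + (f 3 :: 'a :: comm_monoid_add)"
  by (simp add: eval_nat_numeral)

lemma sum_lessThan_2: "(\<Sum>k<(2::nat). f k) = f 0 + (f 1 :: 'a :: comm_monoid_add)"
  by (simp add: eval_nat_numeral)

lemma proj_psi_carrier[simp]: "proj psi_plus \<in> carrier_mat 4 4" "proj psi_minus \<in> carrier_mat 4 4"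
  by (auto simp: proj_def psi_plus_def psi_minus_def)

lemma proj_psi_dim[simp]:
  "dim_row (proj psi_plus) = 4" "dim_col (proj psi_plus) = 4"
  "dim_row (proj psi_minus) = 4" "dim_col (proj psi_minus) = 4"
  by (auto simp: proj_def psi_plus_def psi_minus_def)

lemma complex_sqrt2_square: "complex_of_real (sqrt 2) * complex_of_real (sqrt 2) = 2"
  by (simp flip: of_real_mult)

lemma index_proj_psi_plus:
  "i < 4 \<Longrightarrow> j < 4 \<Longrightarrow> proj psi_plus $$ (i,j) = (if (i = 1 \<or> i = 2) \<and> (j = 1 \<or> j = 2) then 1/2 else 0)"
  by (auto simp: proj_def psi_plus_def complex_sqrt2_square field_simps)

lemma index_proj_psi_minus:
  "i < 4 \<Longrightarrow> j < 4 \<Longrightarrow> proj psi_minus $$ (i,j) =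
    (if (i = 1 \<or> i = 2) \<and> (j = 1 \<or> j = 2) then (if i = j then 1/2 else -1/2) else 0)"
  by (auto simp: proj_def psi_minus_def complex_sqrt2_square field_simps)

lemma ptrace_last_proj_psi:
  "ptrace_last 2 (proj psi_plus) = real_diag_mat 2 (\<lambda>_. 1/2)"
  "ptrace_last 2 (proj psi_minus) = real_diag_mat 2 (\<lambda>_. 1/2)"
proof -
  have i: "i < 2 \<longleftrightarrow> i = 0 \<or> i = 1" for i :: nat by linarith
  show "ptrace_last 2 (proj psi_plus) = real_diag_mat 2 (\<lambda>_. 1/2)"
    by (rule eq_matI) (auto simp: i ptrace_last_def sum_lessThan_2 index_proj_psi_plus index_real_diag_mat)
  show "ptrace_last 2 (proj psi_minus) = real_diag_mat 2 (\<lambda>_. 1/2)"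
    by (rule eq_matI) (auto simp: i ptrace_last_def sum_lessThan_2 index_proj_psi_minus index_real_diag_mat)
qed

text \<open>Their sum is the unitary change to the Bell basis.\<close>

definition bell_isometry_plus :: "complex mat" where
  "bell_isometry_plus = mat 4 4 (\<lambda>(i,j).
     if j = 1 then psi_plus $ i else if j = 0 \<or> j = 3 then (if i = j then 1 else 0) else 0)"

definition bell_isometry_minus :: "complex mat" where
  "bell_isometry_minus = mat 4 4 (\<lambda>(i,j). if j = 2 then psi_minus $ i else 0)"

lemma bell_isometry_carrier[simp]:
  "bell_isometry_plus \<in> carrier_mat 4 4" "bell_isometry_minus \<in> carrier_mat 4 4"
  by (simp_all add: bell_isometry_plus_def bell_isometry_minus_def)

lemma bell_isometry_dim[simp]:
  "dim_row bell_isometry_plus = 4" "dim_col bell_isometry_plus = 4"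
  "dim_row bell_isometry_minus = 4" "dim_col bell_isometry_minus = 4"
  by (simp_all add: bell_isometry_plus_def bell_isometry_minus_def)

lemma bell_isometry_relations:
  "mat_adjoint bell_isometry_plus * bell_isometry_plus
     + mat_adjoint bell_isometry_minus * bell_isometry_minus = 1\<^sub>m 4"
  "mat_adjoint bell_isometry_plus * bell_isometry_minus = 0\<^sub>m 4 4"
  "mat_adjoint bell_isometry_minus * bell_isometry_plus = 0\<^sub>m 4 4"
  "bell_isometry_plus * basis_proj 4 2 = 0\<^sub>m 4 4"
  "bell_isometry_minus * basis_proj 4 1 = 0\<^sub>m 4 4"
  "bell_isometry_plus * basis_proj 4 1 * mat_adjoint bell_isometry_plus = proj psi_plus"
  "bell_isometry_minus * basis_proj 4 2 * mat_adjoint bell_isometry_minus = proj psi_minus"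
  "bell_isometry_plus * basis_proj 4 1 * mat_adjoint bell_isometry_minus = 0\<^sub>m 4 4"
  "bell_isometry_minus * basis_proj 4 2 * mat_adjoint bell_isometry_plus = 0\<^sub>m 4 4"
  by (rule eq_matI; auto simp: bell_isometry_plus_def bell_isometry_minus_def basis_proj_def
      index_real_diag_mat psi_plus_def psi_minus_def proj_def sum_lessThan_4 complex_sqrt2_square
      field_simps elim!: less4_cases)+

definition bell_mixture_eigenvalues :: "real \<Rightarrow> (nat \<Rightarrow> real) \<Rightarrow> real \<Rightarrow> (nat \<Rightarrow> real) \<Rightarrow> nat \<Rightarrow> real" where
  "bell_mixture_eigenvalues p1 e1 p2 e2 k = p1 * e1 (k div 4) * (if k mod 4 = 1 then 1 else 0)
     + p2 * e2 (k div 4) * (if k mod 4 = 2 then 1 else 0)"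

lemma sum_bell_mixture_eigenvalues:
  "f 0 = 0 \<Longrightarrow> (\<Sum>k<n*4. f (bell_mixture_eigenvalues p1 e1 p2 e2 k)) = (\<Sum>i<n. f (p1 * e1 i) + f (p2 * e2 i))"
  unfolding sum_lessThan_mult bell_mixture_eigenvalues_def by (intro sum.cong refl) (simp add: sum_lessThan_4)

lemma bell_mixture_unitary_conj:
  assumes uQ1: "unitary n Q1" and uQ2: "unitary n Q2"
  defines "W \<equiv> kron Q1 bell_isometry_plus + kron Q2 bell_isometry_minus"
  shows "unitary (n*4) W"
    and "bell_mixture p1 (Q1 * real_diag_mat n e1 * mat_adjoint Q1) p2 (Q2 * real_diag_mat n e2 * mat_adjoint Q2)
      = W * real_diag_mat (n*4) (bell_mixture_eigenvalues p1 e1 p2 e2) * mat_adjoint W"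
proof -
  let ?V1 = bell_isometry_plus and ?V2 = bell_isometry_minus
  have Q: "Q1 \<in> carrier_mat n n" "Q2 \<in> carrier_mat n n"
    using uQ1 uQ2 unitary_carrier by auto
  have adjW: "mat_adjoint W = kron (mat_adjoint Q1) (mat_adjoint ?V1) + kron (mat_adjoint Q2) (mat_adjoint ?V2)"
    unfolding W_def using Q by (simp add: mat_adjoint_add[of _ "n*4" "n*4"] mat_adjoint_kron)
  have "mat_adjoint W * W =
      (kron (mat_adjoint Q1 * Q1) (mat_adjoint ?V1 * ?V1) + kron (mat_adjoint Q1 * Q2) (mat_adjoint ?V1 * ?V2))
      + (kron (mat_adjoint Q2 * Q1) (mat_adjoint ?V2 * ?V1) + kron (mat_adjoint Q2 * Q2) (mat_adjoint ?V2 * ?V2))"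
    unfolding adjW unfolding W_def using Q by (intro kron_sum_mult[where a = n and b = 4]) auto
  also have "\<dots> = kron (1\<^sub>m n) (mat_adjoint ?V1 * ?V1) + kron (1\<^sub>m n) (mat_adjoint ?V2 * ?V2)"
    using uQ1 uQ2 Q unfolding unitary_def bell_isometry_relations(2,3)
    by (simp add: kron_zero_right add_zero_mat_dim carrier_matD)
  also have "\<dots> = kron (1\<^sub>m n) (mat_adjoint ?V1 * ?V1 + mat_adjoint ?V2 * ?V2)"
    by (rule kron_add_right[of _ 4 4, symmetric]) (auto intro: carrier_matI)
  also have "\<dots> = 1\<^sub>m (n*4)" unfolding bell_isometry_relations(1) kron_one ..
  finally show "unitary (n*4) W"
    using Q unfolding W_def by (intro unitaryI) simp_all
  let ?D1 = "real_diag_mat n (\<lambda>i. p1 * e1 i)" and ?D2 = "real_diag_mat n (\<lambda>i. p2 * e2 i)"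
  have "W * (kron ?D1 (basis_proj 4 1) + kron ?D2 (basis_proj 4 2)) =
      (kron (Q1 * ?D1) (?V1 * basis_proj 4 1) + kron (Q1 * ?D2) (?V1 * basis_proj 4 2))
      + (kron (Q2 * ?D1) (?V2 * basis_proj 4 1) + kron (Q2 * ?D2) (?V2 * basis_proj 4 2))"
    unfolding W_def using Q by (intro kron_sum_mult[where a = n and b = 4]) auto
  also have "\<dots> = kron (Q1 * ?D1) (?V1 * basis_proj 4 1) + kron (Q2 * ?D2) (?V2 * basis_proj 4 2)"
    using Q unfolding bell_isometry_relations(4,5)
    by (simp add: kron_zero_right add_zero_mat_dim carrier_matD)
  finally have "W * (kron ?D1 (basis_proj 4 1) + kron ?D2 (basis_proj 4 2)) * mat_adjoint W =
      (kron (Q1 * ?D1 * mat_adjoint Q1) (?V1 * basis_proj 4 1 * mat_adjoint ?V1)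
        + kron (Q1 * ?D1 * mat_adjoint Q2) (?V1 * basis_proj 4 1 * mat_adjoint ?V2))
      + (kron (Q2 * ?D2 * mat_adjoint Q1) (?V2 * basis_proj 4 2 * mat_adjoint ?V1)
        + kron (Q2 * ?D2 * mat_adjoint Q2) (?V2 * basis_proj 4 2 * mat_adjoint ?V2))"
    unfolding adjW using Q by (simp only:) (intro kron_sum_mult[where a = n and b = 4]; auto)
  also have "\<dots> = kron (Q1 * ?D1 * mat_adjoint Q1) (proj psi_plus) + kron (Q2 * ?D2 * mat_adjoint Q2) (proj psi_minus)"
    using Q unfolding bell_isometry_relations(6-9)
    by (simp add: kron_zero_right add_zero_mat_dim carrier_matD)
  also have "\<dots> = bell_mixture p1 (Q1 * real_diag_mat n e1 * mat_adjoint Q1)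
      p2 (Q2 * real_diag_mat n e2 * mat_adjoint Q2)"
  proof -
    have "Q * (c \<cdot>\<^sub>m real_diag_mat n e) * mat_adjoint Q = c \<cdot>\<^sub>m (Q * real_diag_mat n e * mat_adjoint Q)"
      if "Q \<in> carrier_mat n n" for Q c e
      using that by (simp add: mult_smult_distrib[OF that real_diag_mat_carrier]
          mult_smult_assoc_mat[of _ n n _ n])
    then show ?thesis
      unfolding bell_mixture_def real_diag_mat_smult[symmetric] using Q by (simp add: kron_smult_left)
  qed
  finally show "bell_mixture p1 (Q1 * real_diag_mat n e1 * mat_adjoint Q1) p2 (Q2 * real_diag_mat n e2 * mat_adjoint Q2)
      = W * real_diag_mat (n*4) (bell_mixture_eigenvalues p1 e1 p2 e2) * mat_adjoint W"
    by (simp add: basis_proj_def kron_real_diag_mat real_diag_mat_add bell_mixture_eigenvalues_def[abs_def])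
qed

lemma bell_mixture_diagonalization:
  assumes \<rho>1: "density n \<rho>1" and \<rho>2: "density n \<rho>2"
  obtains W e1 e2 where "unitary (n*4) W"
    "bell_mixture p1 \<rho>1 p2 \<rho>2 = W * real_diag_mat (n*4) (bell_mixture_eigenvalues p1 e1 p2 e2) * mat_adjoint W"
    "\<And>k. k < n \<Longrightarrow> 0 \<le> e1 k" "(\<Sum>k<n. e1 k) = 1" "vn_entropy \<rho>1 = - (\<Sum>i<n. plogp (e1 i))"
    "\<And>k. k < n \<Longrightarrow> 0 \<le> e2 k" "(\<Sum>k<n. e2 k) = 1" "vn_entropy \<rho>2 = - (\<Sum>i<n. plogp (e2 i))"
proof -
  obtain Q1 e1 where uQ1: "unitary n Q1" and r1: "\<rho>1 = Q1 * real_diag_mat n e1 * mat_adjoint Q1"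
    and "\<And>k. k < n \<Longrightarrow> 0 \<le> e1 k" "(\<Sum>k<n. e1 k) = 1"
    using density_spectral_decomposition[OF \<rho>1] by blast
  moreover obtain Q2 e2 where uQ2: "unitary n Q2" and r2: "\<rho>2 = Q2 * real_diag_mat n e2 * mat_adjoint Q2"
    and "\<And>k. k < n \<Longrightarrow> 0 \<le> e2 k" "(\<Sum>k<n. e2 k) = 1"
    using density_spectral_decomposition[OF \<rho>2] by blast
  moreover have "vn_entropy \<rho>1 = - (\<Sum>i<n. plogp (e1 i))" "vn_entropy \<rho>2 = - (\<Sum>i<n. plogp (e2 i))"
    by (simp_all only: r1 r2 vn_entropy_unitary_conj[OF uQ1] vn_entropy_unitary_conj[OF uQ2])
  ultimately show thesis
    using that bell_mixture_unitary_conj(1)[OF uQ1 uQ2] bell_mixture_unitary_conj(2)[OF uQ1 uQ2, of p1 e1 p2 e2]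
    unfolding r1 r2 by blast
qed

lemma density_bell_mixture:
  assumes "density n \<rho>1" "density n \<rho>2" "0 \<le> p1" "0 \<le> p2" "p1 + p2 = 1"
  shows "density (n*4) (bell_mixture p1 \<rho>1 p2 \<rho>2)"
proof -
  obtain W e1 e2 where W: "unitary (n*4) W"
    and \<rho>: "bell_mixture p1 \<rho>1 p2 \<rho>2 = W * real_diag_mat (n*4) (bell_mixture_eigenvalues p1 e1 p2 e2) * mat_adjoint W"
    and e: "\<And>k. k < n \<Longrightarrow> 0 \<le> e1 k" "(\<Sum>k<n. e1 k) = 1" "\<And>k. k < n \<Longrightarrow> 0 \<le> e2 k" "(\<Sum>k<n. e2 k) = 1"
    using bell_mixture_diagonalization[OF assms(1,2)] by metis
  have "(\<Sum>k<n*4. bell_mixture_eigenvalues p1 e1 p2 e2 k) = 1"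
    using sum_bell_mixture_eigenvalues[of "\<lambda>x. x"] e(2,4) assms(5)
    by (simp add: sum.distrib sum_distrib_left[symmetric])
  moreover have "0 \<le> bell_mixture_eigenvalues p1 e1 p2 e2 k" if "k < n*4" for k
    using mult_index_bounds[OF that] e assms(3,4) unfolding bell_mixture_eigenvalues_def by simp
  ultimately show ?thesis unfolding \<rho> using W by (intro density_unitary_conj)
qed

lemma vn_entropy_bell_mixture:
  assumes "density n \<rho>1" "density n \<rho>2" "0 \<le> p1" "0 \<le> p2" "p1 + p2 = 1"
  shows "vn_entropy (bell_mixture p1 \<rho>1 p2 \<rho>2) =
    p1 * vn_entropy \<rho>1 + p2 * vn_entropy \<rho>2 - plogp p1 - plogp p2"
proof -
  obtain W e1 e2 where W: "unitary (n*4) W"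
    and \<rho>: "bell_mixture p1 \<rho>1 p2 \<rho>2 = W * real_diag_mat (n*4) (bell_mixture_eigenvalues p1 e1 p2 e2) * mat_adjoint W"
    and e: "\<And>k. k < n \<Longrightarrow> 0 \<le> e1 k" "(\<Sum>k<n. e1 k) = 1" "\<And>k. k < n \<Longrightarrow> 0 \<le> e2 k" "(\<Sum>k<n. e2 k) = 1"
    and S: "vn_entropy \<rho>1 = - (\<Sum>i<n. plogp (e1 i))" "vn_entropy \<rho>2 = - (\<Sum>i<n. plogp (e2 i))"
    using bell_mixture_diagonalization[OF assms(1,2)] by metis
  have "(\<Sum>i<n. plogp (p1 * e1 i) + plogp (p2 * e2 i)) =
      (\<Sum>i<n. p1 * plogp (e1 i) + e1 i * plogp p1 + (p2 * plogp (e2 i) + e2 i * plogp p2))"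
    using assms(3,4) e by (intro sum.cong refl) (simp add: plogp_mult)
  also have "\<dots> = p1 * (\<Sum>i<n. plogp (e1 i)) + p2 * (\<Sum>i<n. plogp (e2 i)) + plogp p1 + plogp p2"
    using e(2,4) by (simp add: sum.distrib sum_distrib_left[symmetric] sum_distrib_right[symmetric])
  finally show ?thesis
    unfolding \<rho> vn_entropy_unitary_conj[OF W] S by (simp add: sum_bell_mixture_eigenvalues)
qed

lemma ptrace_bell_mixture:
  assumes "\<rho>1 \<in> carrier_mat n n" "\<rho>2 \<in> carrier_mat n n"
  shows "ptrace_last 2 (bell_mixture p1 \<rho>1 p2 \<rho>2) =
    kron (complex_of_real p1 \<cdot>\<^sub>m \<rho>1 + complex_of_real p2 \<cdot>\<^sub>m \<rho>2) (real_diag_mat 2 (\<lambda>_. 1/2))"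
proof -
  have "ptrace_last 2 (kron \<rho> (proj psi)) = kron \<rho> (ptrace_last 2 (proj psi))"
    if "psi = psi_plus \<or> psi = psi_minus" for \<rho> psi
    by (rule ptrace_last_kron) (use that in auto)
  then show ?thesis
    unfolding bell_mixture_def using assms
    by (simp add: ptrace_last_comb[of _ "n*4"] ptrace_last_proj_psi kron_add_left[of _ n n]
        kron_smult_left)
qed

lemma vn_entropy_maximally_mixed_qubit: "vn_entropy (real_diag_mat 2 (\<lambda>_. 1/2)) = 1"
  by (simp add: vn_entropy_real_diag_mat sum_lessThan_2 plogp_def log_divide)

lemma density_maximally_mixed_qubit: "density 2 (real_diag_mat 2 (\<lambda>_. 1/2))"
  by (rule density_real_diag_mat) (simp_all add: sum_lessThan_2)

lemma vn_entropy_ptrace_bell_mixture: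
  assumes \<rho>1: "density n \<rho>1" and \<rho>2: "density n \<rho>2" and p: "0 \<le> p1" "0 \<le> p2" "p1 + p2 = 1"
  shows "vn_entropy (ptrace_last 2 (bell_mixture p1 \<rho>1 p2 \<rho>2)) =
    vn_entropy (complex_of_real p1 \<cdot>\<^sub>m \<rho>1 + complex_of_real p2 \<cdot>\<^sub>m \<rho>2) + 1"
proof -
  have "\<rho>1 \<in> carrier_mat n n" "\<rho>2 \<in> carrier_mat n n"
    using \<rho>1 \<rho>2 unfolding density_def psd_mat_def hermitian_mat_def by auto
  then show ?thesis
    using vn_entropy_kron[OF density_convex_comb[OF \<rho>1 \<rho>2 p] density_maximally_mixed_qubit]
    by (simp add: ptrace_bell_mixture vn_entropy_maximally_mixed_qubit)
qed

lemma proj_psi_plus_minus: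
  "proj psi_plus + proj psi_minus =
    kron (basis_proj 2 0) (basis_proj 2 1) + kron (basis_proj 2 1) (basis_proj 2 0)"
proof -
  have "proj psi_plus + proj psi_minus = basis_proj 4 1 + basis_proj 4 2"
    by (rule eq_matI) (auto simp: index_proj_psi_plus index_proj_psi_minus basis_proj_def
        index_real_diag_mat)
  then show ?thesis by (simp add: kron_basis_proj)
qed

lemma separable_bell_mixture_half:
  assumes \<rho>: "density n \<rho>"
  shows "separable (n*2) 2 (bell_mixture (1/2) \<rho> (1/2) \<rho>)"
proof -
  \<comment> \<open>\<open>\<Psi>\<^sup>+\<close> and \<open>\<Psi>\<^sup>-\<close> mix in equal parts to the separable \<open>(|01\<rangle>\<langle>01| + |10\<rangle>\<langle>10|)/2\<close>\<close>
  define F where "F k = basis_proj 2 k" for k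
  have R: "\<rho> \<in> carrier_mat n n" using \<rho> unfolding density_def psd_mat_def hermitian_mat_def by auto
  have F: "kron (F a) (F b) \<in> carrier_mat 4 4" for a b
    using kron_carrier[OF basis_proj_carrier basis_proj_carrier, of 2 a 2 b] by (simp add: F_def)
  have "bell_mixture (1/2) \<rho> (1/2) \<rho> = complex_of_real (1/2) \<cdot>\<^sub>m kron \<rho> (proj psi_plus + proj psi_minus)"
    unfolding bell_mixture_def using R
    by (simp add: kron_add_right[of _ 4 4] add_smult_distrib_left_mat[of _ "n*4" "n*4"])
  also have "\<dots> = complex_of_real (1/2) \<cdot>\<^sub>m (kron (kron \<rho> (F 0)) (F 1) + kron (kron \<rho> (F 1)) (F 0))"
    unfolding proj_psi_plus_minus F_def[symmetric] using F by (simp add: kron_add_right[of _ 4 4] kron_assoc)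
  finally have mix: "bell_mixture (1/2) \<rho> (1/2) \<rho> =
      complex_of_real (1/2) \<cdot>\<^sub>m (kron (kron \<rho> (F 0)) (F 1) + kron (kron \<rho> (F 1)) (F 0))" .
  have basis: "density 2 (F k)" if "k < 2" for k
    unfolding F_def basis_proj_def using that by (intro density_real_diag_mat) (auto simp: sum_lessThan_2)
  define \<sigma> where "\<sigma> k = kron \<rho> (F k)" for k
  define \<tau> where "\<tau> k = F (1 - k)" for k
  have comps: "\<forall>k<2. 0 \<le> (1/2::real) \<and> density (n*2) (\<sigma> k) \<and> density 2 (\<tau> k)"
    unfolding \<sigma>_def \<tau>_def using basis by (auto intro: density_kron[OF \<rho>])
  have carrier: "bell_mixture (1/2) \<rho> (1/2) \<rho> \<in> carrier_mat (n*2*2) (n*2*2)"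
    unfolding mix using R by (intro carrier_matI) (simp_all add: F_def carrier_matD[OF R])
  have entries: "\<forall>i<n*2*2. \<forall>j<n*2*2. bell_mixture (1/2) \<rho> (1/2) \<rho> $$ (i,j) =
      (\<Sum>k<2. complex_of_real (1/2) * kron (\<sigma> k) (\<tau> k) $$ (i,j))"
    unfolding mix \<sigma>_def \<tau>_def using R by (simp add: sum_lessThan_2 distrib_left F_def)
  have weights: "(\<Sum>k<(2::nat). 1/2 :: real) = 1" by simp
  show ?thesis
    unfolding separable_def using carrier comps weights entries by (intro conjI exI) assumption+
qed

lemma not_bound_entangled_if_entropy_gap:
  assumes "density (dX * dY) \<rho>"
    and "vn_entropy \<rho> \<le> vn_entropy (ptrace_last dY \<rho>)"
    and "vn_entropy (ptrace_last dY \<rho>) = vn_entropy \<rho> \<Longrightarrow> separable dX dY \<rho>"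
    and "\<forall>\<sigma>. density (dX * dY) \<sigma> \<longrightarrow> vn_entropy (ptrace_last dY \<sigma>) > vn_entropy \<sigma> \<longrightarrow> distillable \<sigma>"
  shows "\<not> bound_entangled distillable dX dY \<rho>"
proof (cases "vn_entropy \<rho> < vn_entropy (ptrace_last dY \<rho>)")
  case True
  then have "distillable \<rho>" using assms(1,4) by blast
  then show ?thesis unfolding bound_entangled_def by blast
next
  case False
  then have "separable dX dY \<rho>" using assms(2,3) by simp
  then show ?thesis unfolding bound_entangled_def entangled_def by blast
qed

lemma bell_mixture_entropy_gap:
  assumes "density n \<rho>1" "density n \<rho>2" "0 \<le> p1" "0 \<le> p2" "p1 + p2 = 1"
  defines "\<rho> \<equiv> bell_mixture p1 \<rho>1 p2 \<rho>2"
  shows "vn_entropy \<rho> \<le> vn_entropy (ptrace_last 2 \<rho>)"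
    and "vn_entropy (ptrace_last 2 \<rho>) = vn_entropy \<rho> \<Longrightarrow> \<rho>1 = \<rho>2 \<and> p1 = 1/2 \<and> p2 = 1/2"
proof -
  note concave = vn_entropy_concave[OF assms(1-5)]
    and binary = binary_entropy_le_one[OF assms(3-5)]
  \<comment> \<open>the entropy gap splits into the concavity gap of \<open>S\<close> plus \<open>1 - H(p\<^sub>1, p\<^sub>2)\<close>\<close>
  have gap: "vn_entropy (ptrace_last 2 \<rho>) - vn_entropy \<rho> =
      (vn_entropy (complex_of_real p1 \<cdot>\<^sub>m \<rho>1 + complex_of_real p2 \<cdot>\<^sub>m \<rho>2)
        - p1 * vn_entropy \<rho>1 - p2 * vn_entropy \<rho>2) + (1 + plogp p1 + plogp p2)"
    unfolding \<rho>_def vn_entropy_ptrace_bell_mixture[OF assms(1-5)] vn_entropy_bell_mixture[OF assms(1-5)]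
    by simp
  then show "vn_entropy \<rho> \<le> vn_entropy (ptrace_last 2 \<rho>)"
    using concave(1) binary(1) by linarith
  assume "vn_entropy (ptrace_last 2 \<rho>) = vn_entropy \<rho>"
  then have "- plogp p1 - plogp p2 = 1"
    and concave_eq: "p1 * vn_entropy \<rho>1 + p2 * vn_entropy \<rho>2 =
      vn_entropy (complex_of_real p1 \<cdot>\<^sub>m \<rho>1 + complex_of_real p2 \<cdot>\<^sub>m \<rho>2)"
    using gap concave(1) binary(1) by linarith+
  then have "p1 = 1/2" "p2 = 1/2" using binary(2) assms(5) by auto
  then show "\<rho>1 = \<rho>2 \<and> p1 = 1/2 \<and> p2 = 1/2" using concave(2)[OF concave_eq] by simp
qed

theorem mainTheorem5:
  fixes d m :: nat and p1 p2 :: real and \<rho>1 \<rho>2 \<rho> :: "complex mat"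
  assumes "density (d * m) \<rho>1" and "density (d * m) \<rho>2"
    and "0 \<le> p1" and "0 \<le> p2" and "p1 + p2 = 1"
    and "\<rho> = complex_of_real p1 \<cdot>\<^sub>m kron \<rho>1 (proj psi_plus)
           + complex_of_real p2 \<cdot>\<^sub>m kron \<rho>2 (proj psi_minus)"
  shows "vn_entropy (ptrace_last 2 \<rho>) \<ge> vn_entropy \<rho>
    \<and> (vn_entropy (ptrace_last 2 \<rho>) = vn_entropy \<rho> \<longrightarrow>
         \<rho>1 = \<rho>2 \<and> p1 = 1/2 \<and> p2 = 1/2 \<and> separable (d * m * 2) 2 \<rho>)
    \<and> (\<forall>distillable :: complex mat \<Rightarrow> bool.
         (\<forall>\<sigma>. density (d * m * 2 * 2) \<sigma> \<longrightarrow>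
              vn_entropy (ptrace_last 2 \<sigma>) > vn_entropy \<sigma> \<longrightarrow> distillable \<sigma>)
         \<longrightarrow> \<not> bound_entangled distillable (d * m * 2) 2 \<rho>)"
proof -
  have \<rho>: "\<rho> = bell_mixture p1 \<rho>1 p2 \<rho>2" unfolding assms(6) bell_mixture_def ..
  note gap = bell_mixture_entropy_gap[OF assms(1-5), folded \<rho>]
  have eq_case: "\<rho>1 = \<rho>2 \<and> p1 = 1/2 \<and> p2 = 1/2 \<and> separable (d * m * 2) 2 \<rho>"
    if "vn_entropy (ptrace_last 2 \<rho>) = vn_entropy \<rho>"
  proof -
    have eq: "\<rho>1 = \<rho>2" "p1 = 1/2" "p2 = 1/2" using gap(2)[OF that] by auto
    show ?thesis unfolding \<rho> eq using separable_bell_mixture_half[OF assms(2)] by simp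
  qed
  have "density (d * m * 2 * 2) \<rho>"
    using density_bell_mixture[OF assms(1-5)] unfolding \<rho> by (simp add: mult.assoc)
  from not_bound_entangled_if_entropy_gap[OF this gap(1)] eq_case
  show ?thesis using gap(1) by blast
qed

end
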